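(* Let $s\in\mathbb R$, $p,q\in(0,+\infty]$ and $x_0\in\mathbb R^d$, and assume the wavelet system satisfies the dyadic covering property. Then the set of sequences $\mathcal D\in b^{s,q}_p$ such that $\delta_{\mathcal D}(x_0)=-s+\frac dp$ is prevalent in $b^{s,q}_p$, residual in $b^{s,q}_p$ (it contains a countable intersection of dense open subsets), and maximal lineable in $b^{s,q}_p$ (its union with $\{0\}$ contains a vector subspace whose Hamel dimension equals that of $b^{s,q}_p$).
   Context: Setting: integers $d,N\ge1$, bounded fast-decaying $\psi^{(1)},\dots,\psi^{(N)}:\mathbb R^d\to\mathbb C$, wavelets $\psi^{(i)}_{j,k}(x)=\psi^{(i)}(2^jx-k)$, $j\ge0$, $k\in\mathbb Z^d$; dyadic cubes $\lambda_{j,k}=\prod_{m=1}^d[k_m2^{-j},(k_m+1)2^{-j})$ of scale $j$; coefficients indexed by $(i,\lambda)$; $\Lambda_j$ = pairs $(i,\lambda)$ with $\lambda$ of scale $j$. $b^{s,q}_p$: sequences $(c^{(i)}_\lambda)$ with $\big(\big(\sum_{(i,\lambda)\in\Lambda_j}|c^{(i)}_\lambda2^{(s-d/p)j}|^p\big)^{1/p}\big)_{j\ge0}\in\ell^q$ (supremum if $p=\infty$; $d/p=0$ if $p=\infty$), a complete metric vector space for the $\ell^q$ (quasi-)norm. Divergence exponent $\delta_{\mathcal C}(x)$: supremum of $\gamma$ such that there exist $C>0$ and $(i_n,j_n,k_n)$ with $j_n\to\infty$ and $|c^{(i_n)}_{j_n,k_n}\psi^{(i_n)}_{j_n,k_n}(x)|\ge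 C2^{\gamma j_n}$. Dyadic covering property: there exist $C_0>0$ and finitely many triplets $(i_l,j_l,k_l)$ with $j_l\ge1$ such that every $x\in[0,1)^d$ has some $l$ with $|\psi^{(i_l)}(2^{j_l}x-k_l)|\ge C_0$. Prevalence: in a complete metric vector space $E$, a Borel set $A$ is Haar-null if there is a compactly supported Borel probability measure $\mu$ with $\mu(x+A)=0$ for all $x\in E$; a set is Haar-null if contained in a Haar-null Borel set; its complement is then called prevalent. *)

theory Defs
  imports "HOL-Analysis.Analysis" "HOL-Library.Function_Algebras" "HOL-Library.Equipollence"
begin

text \<open>Wavelet coefficient sequences: c i j k, with i in the finite index type 'i
 (the N wavelets), scale j :: nat, position k :: int^'d (the dyadic cube of scale j at k).\<close>

type_synonym ('i, 'd) coeffs = "'i \<Rightarrow> nat \<Rightarrow> int ^ 'd \<Rightarrow> complex"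

definition ivec :: "int ^ 'd \<Rightarrow> real ^ 'd" where
  "ivec k = (\<chi> m. real_of_int (k $ m))"

definition wav :: "('i \<Rightarrow> real ^ 'd \<Rightarrow> complex) \<Rightarrow> 'i \<Rightarrow> nat \<Rightarrow> int ^ 'd \<Rightarrow> real ^ 'd \<Rightarrow> complex" where
  "wav \<psi> i j k x = \<psi> i ((2 ^ j) *\<^sub>R x - ivec k)"

definition dp :: "'d::finite itself \<Rightarrow> ereal \<Rightarrow> real" where
  "dp _ p = (if p = \<infinity> then 0 else real CARD('d) / real_of_ereal p)"

text \<open>x powr r in ennreal (for r > 0), with \<infinity> powr r = \<infinity>\<close>
definition epow :: "ennreal \<Rightarrow> real \<Rightarrow> ennreal" where
  "epow x r = (if x = (top::ennreal) then (top::ennreal) else ennreal (enn2real x powr r))"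

definition level_norm :: "real \<Rightarrow> ereal \<Rightarrow> ('i, 'd::finite) coeffs \<Rightarrow> nat \<Rightarrow> ennreal" where
  "level_norm s p c j =
     (if p = \<infinity> then (SUP ik \<in> UNIV. ennreal (cmod (c (fst ik) j (snd ik)) * 2 powr ((s - dp TYPE('d) p) * real j)))
      else epow (nn_integral (count_space UNIV) (\<lambda>ik. ennreal ((cmod (c (fst ik) j (snd ik)) * 2 powr ((s - dp TYPE('d) p) * real j)) powr real_of_ereal p)))
                (1 / real_of_ereal p))"

definition bnorm :: "real \<Rightarrow> ereal \<Rightarrow> ereal \<Rightarrow> ('i, 'd::finite) coeffs \<Rightarrow> ennreal" where
  "bnorm s p q c =
     (if q = \<infinity> then (SUP j \<in> UNIV. level_norm s p c j)
      else epow (nn_integral (count_space UNIV) (\<lambda>j. epow (level_norm s p c j) (real_of_ereal q))) (1 / real_of_ereal q))"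

definition bspace :: "real \<Rightarrow> ereal \<Rightarrow> ereal \<Rightarrow> ('i, 'd::finite) coeffs set" where
  "bspace s p q = {c. bnorm s p q c < (top::ennreal)}"

definition btop :: "real \<Rightarrow> ereal \<Rightarrow> ereal \<Rightarrow> ('i, 'd::finite) coeffs topology" where
  "btop s p q = topology_generated_by
     {{c' \<in> bspace s p q. bnorm s p q (c' - c) < ennreal r} | c r. c \<in> bspace s p q \<and> r > 0}"

definition borel_sets :: "'a topology \<Rightarrow> 'a set set" where
  "borel_sets T = sigma_sets (topspace T) {U. openin T U}"

definition haar_null_borel :: "'a::ab_group_add topology \<Rightarrow> 'a set \<Rightarrow> bool" where
  "haar_null_borel T A \<longleftrightarrow> A \<in> borel_sets T \<and>
     (\<exists>\<mu>. space \<mu> = topspace T \<and> sets \<mu> = borel_sets T \<and> emeasure \<mu> (space \<mu>) = 1 \<and>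
          (\<exists>K. compactin T K \<and> K \<in> sets \<mu> \<and> emeasure \<mu> K = 1) \<and>
          (\<forall>x \<in> topspace T. emeasure \<mu> ((\<lambda>a. x + a) ` A) = 0))"

definition prevalent :: "'a::ab_group_add topology \<Rightarrow> 'a set \<Rightarrow> bool" where
  "prevalent T S \<longleftrightarrow> (\<exists>A. haar_null_borel T A \<and> topspace T - S \<subseteq> A)"

definition residual :: "'a topology \<Rightarrow> 'a set \<Rightarrow> bool" where
  "residual T S \<longleftrightarrow> (\<exists>U :: nat \<Rightarrow> 'a set. (\<forall>n. openin T (U n) \<and> T closure_of (U n) = topspace T)
                        \<and> (\<Inter>n. U n) \<subseteq> S)"

definition cscale :: "complex \<Rightarrow> ('i, 'd) coeffs \<Rightarrow> ('i, 'd) coeffs" where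
  "cscale a c = (\<lambda>i j k. a * c i j k)"

definition hamel_basis :: "('i, 'd) coeffs set \<Rightarrow> ('i, 'd) coeffs set \<Rightarrow> bool" where
  "hamel_basis V H \<longleftrightarrow> H \<subseteq> V \<and> \<not> module.dependent cscale H \<and> module.span cscale H = V"

definition maximal_lineable :: "('i, 'd) coeffs set \<Rightarrow> ('i, 'd) coeffs set \<Rightarrow> bool" where
  "maximal_lineable E S \<longleftrightarrow> (\<exists>V H HE. module.subspace cscale V \<and> V \<subseteq> S \<union> {0} \<and>
      hamel_basis V H \<and> hamel_basis E HE \<and> H \<approx> HE)"

definition div_exp :: "('i \<Rightarrow> real ^ 'd \<Rightarrow> complex) \<Rightarrow> ('i, 'd) coeffs \<Rightarrow> real ^ 'd \<Rightarrow> ereal" where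
  "div_exp \<psi> c x = Sup (ereal ` {\<gamma>. \<exists>C > 0. \<exists>(ii :: nat \<Rightarrow> 'i) (js :: nat \<Rightarrow> nat) (ks :: nat \<Rightarrow> int ^ 'd).
      filterlim js at_top sequentially \<and>
      (\<forall>n. cmod (c (ii n) (js n) (ks n) * wav \<psi> (ii n) (js n) (ks n) x) \<ge> C * 2 powr (\<gamma> * real (js n)))})"

definition unit_cube :: "(real ^ 'd) set" where
  "unit_cube = {x. \<forall>m. 0 \<le> x $ m \<and> x $ m < 1}"

definition dyadic_covering :: "('i \<Rightarrow> real ^ 'd \<Rightarrow> complex) \<Rightarrow> bool" where
  "dyadic_covering \<psi> \<longleftrightarrow> (\<exists>C0 > 0. \<exists>L :: ('i \<times> nat \<times> (int ^ 'd)) set. finite L \<and>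
      (\<forall>(i, j, k) \<in> L. j \<ge> 1) \<and>
      (\<forall>x \<in> unit_cube. \<exists>(i, j, k) \<in> L. cmod (wav \<psi> i j k x) \<ge> C0))"

definition bounded_fast_decay :: "(real ^ 'd \<Rightarrow> complex) \<Rightarrow> bool" where
  "bounded_fast_decay f \<longleftrightarrow> (\<exists>B. \<forall>x. cmod (f x) \<le> B) \<and>
     (\<forall>M::real. \<exists>C. \<forall>x. cmod (f x) \<le> C * (1 + norm x) powr (- M))"

end

theory Submission
  imports Defs "HOL-Real_Asymp.Real_Asymp"
begin

(* Every sequence of b^{s,q}_p has divergence exponent at most -s + d/p at x0: a coefficient of
   scale j is at most |c| 2^{(d/p - s) j} and the wavelets are bounded.  By the dyadic covering
   property there is, at every fine scale, a wavelet that is at least C0 at x0 (a peak).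
   Large coefficients at peaks of ever finer scales form dense open sets whose intersection
   consists of sequences attaining the bound, hence residuality.  Copying every coefficient of a
   sequence to the peaks of infinitely many scales, with polynomial damping, is an injective
   linear map of b^{s,q}_p into the generic set together with 0, hence maximal lineability.  The
   image g of one nonzero sequence is a probe for prevalence: two points of a line x + R g outside
   the generic set would differ by a nonzero multiple of g, but a difference of two non-generic
   sequences is non-generic.  Throughout, the r-th power of the quasi-norm, r = min(1, p, q), is
   subadditive, which makes b^{s,q}_p a metric space. *)

lemma powr_add_le_add_powr:
  fixes a b r :: real
  assumes "a \<ge> 0" "b \<ge> 0" "0 < r" "r \<le> 1"
  shows "(a + b) powr r \<le> a powr r + b powr r"
proof (cases "a + b = 0")
  case True
  then show ?thesis using assms by auto
next
  case False
  then have ab: "a + b > 0" using assms by linarith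
  define t where "t = a / (a + b)"
  have t: "0 \<le> t" "t \<le> 1" using assms ab by (auto simp: t_def field_simps)
  have "t \<le> t powr r" "1 - t \<le> (1 - t) powr r"
    using powr_mono'[of r 1 t] powr_mono'[of r 1 "1 - t"] t assms by simp_all
  moreover have "a powr r + b powr r = (a + b) powr r * (t powr r + (1 - t) powr r)"
  proof -
    have "a = (a + b) * t" "b = (a + b) * (1 - t)" using ab by (auto simp: t_def field_simps)
    then show ?thesis using ab t by (metis distrib_left powr_mult)
  qed
  ultimately have "(a + b) powr r * 1 \<le> a powr r + b powr r"
    by (metis add_mono mult_left_mono add.commute diff_add_cancel powr_ge_zero)
  then show ?thesis by simp
qed

lemma powr_less_powr_iff:
  fixes x y a :: real
  shows "0 < a \<Longrightarrow> 0 \<le> x \<Longrightarrow> 0 \<le> y \<Longrightarrow> x powr a < y powr a \<longleftrightarrow> x < y"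
  by (meson not_le powr_less_mono2 powr_mono2 less_imp_le)

lemma convex_combination_powr_le:
  fixes u v t P :: real
  assumes "0 \<le> t" "t \<le> 1" "u \<ge> 0" "v \<ge> 0" "P \<ge> 1"
  shows "((1 - t) * u + t * v) powr P \<le> (1 - t) * u powr P + t * v powr P"
proof -
  have contract: "(a * x) powr P \<le> a * x powr P" if "0 \<le> a" "a \<le> 1" "x \<ge> 0" for a x
  proof -
    have "(a * x) powr P = a powr P * x powr P" using that by (simp add: powr_mult)
    also have "\<dots> \<le> a * x powr P"
      using powr_mono'[of 1 P a] that assms by (intro mult_right_mono) auto
    finally show ?thesis .
  qed
  consider "u > 0" "v > 0" | "u = 0" | "v = 0" using assms by linarith
  then show ?thesis
  proof cases
    case 1
    then show ?thesis using convex_onD[OF powr_convex[OF assms(5)], of t u v] assms by simp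
  next
    case 2
    then show ?thesis using contract[of t v] assms by simp
  next
    case 3
    then show ?thesis using contract[of "1 - t" u] assms by simp
  qed
qed

lemma epow_ennreal: "x \<ge> 0 \<Longrightarrow> epow (ennreal x) r = ennreal (x powr r)"
  by (simp add: epow_def)

lemma epow_top [simp]: "epow top r = top"
  by (simp add: epow_def)

lemma epow_0 [simp]: "epow 0 r = 0"
  by (simp add: epow_def)

lemma epow_mono:
  assumes "r > 0" "x \<le> y"
  shows "epow x r \<le> epow y r"
proof (cases y)
  case (real b)
  then obtain a where "a \<ge> 0" "x = ennreal a" "a \<le> b"
    using assms by (cases x) (auto simp: ennreal_le_iff2 top_unique)
  then show ?thesis using real assms by (simp add: epow_ennreal powr_mono2)
qed simp

lemma epow_epow: "epow (epow x r) r' = epow x (r * r')"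
  by (cases x) (auto simp: epow_ennreal powr_powr)

lemma epow_1 [simp]: "epow x 1 = x"
  by (cases x) (auto simp: epow_ennreal)

lemma epow_inverse [simp]: "r \<noteq> 0 \<Longrightarrow> epow (epow x r) (1 / r) = x"
  by (cases x) (auto simp: epow_ennreal powr_powr)

lemma epow_pos: "r > 0 \<Longrightarrow> x > 0 \<Longrightarrow> epow x r > 0"
  by (cases x) (auto simp: epow_ennreal)

lemma epow_mult:
  assumes "r > 0"
  shows "epow (x * y) r = epow x r * epow y r"
proof (cases x; cases y)
  fix a b assume "a \<ge> 0" "x = ennreal a" "b \<ge> 0" "y = ennreal b"
  then show ?thesis by (simp add: epow_ennreal ennreal_mult[symmetric] powr_mult)
next
  fix a assume "x = top" "y = ennreal a" "a \<ge> 0"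
  then show ?thesis using epow_pos[OF assms, of y]
    by (cases "a = 0") (auto simp: ennreal_top_mult)
next
  fix a assume "x = ennreal a" "a \<ge> 0" "y = top"
  then show ?thesis using epow_pos[OF assms, of x]
    by (cases "a = 0") (auto simp: ennreal_mult_top)
qed simp

lemma epow_add_le:
  assumes "0 < r" "r \<le> 1"
  shows "epow (x + y) r \<le> epow x r + epow y r"
  using assms
  by (cases x; cases y)
     (simp_all add: epow_ennreal ennreal_plus[symmetric] powr_add_le_add_powr del: ennreal_plus)

lemma epow_less_top_iff [simp]: "epow x r < top \<longleftrightarrow> x < top"
  by (cases x) (auto simp: epow_ennreal)

lemma SUP_epow:
  assumes "r > 0"
  shows "(SUP x\<in>A. epow (f x) r) = epow (SUP x\<in>A. f x) r"
proof (rule antisym)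
  show "(SUP x\<in>A. epow (f x) r) \<le> epow (SUP x\<in>A. f x) r"
    by (intro SUP_least epow_mono assms SUP_upper)
  have "(SUP x\<in>A. f x) \<le> epow (SUP x\<in>A. epow (f x) r) (1/r)"
  proof (intro SUP_least)
    fix x assume "x \<in> A"
    then have "epow (epow (f x) r) (1/r) \<le> epow (SUP x\<in>A. epow (f x) r) (1/r)"
      using assms by (intro epow_mono SUP_upper) auto
    then show "f x \<le> epow (SUP x\<in>A. epow (f x) r) (1/r)" using assms by simp
  qed
  then have "epow (SUP x\<in>A. f x) r \<le> epow (epow (SUP x\<in>A. epow (f x) r) (1/r)) r"
    using assms by (rule epow_mono[rotated])
  then show "epow (SUP x\<in>A. f x) r \<le> (SUP x\<in>A. epow (f x) r)"
    using assms by (simp add: epow_epow)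
qed

definition lp_norm :: "ereal \<Rightarrow> ('a \<Rightarrow> ennreal) \<Rightarrow> ennreal" where
  "lp_norm p f = (if p = \<infinity> then (SUP x. f x)
     else epow (\<integral>\<^sup>+x. epow (f x) (real_of_ereal p) \<partial>count_space UNIV) (1 / real_of_ereal p))"

lemma ereal_pos_cases:
  assumes "p > (0::ereal)"
  obtains "p = \<infinity>" | P where "P > 0" "p = ereal P"
  using assms by (cases p) auto

lemma lp_norm_mono:
  assumes "p > 0" "\<And>x. f x \<le> g x"
  shows "lp_norm p f \<le> lp_norm p g"
  using assms(1)
  by (cases rule: ereal_pos_cases)
     (use assms in \<open>auto simp: lp_norm_def intro!: SUP_mono epow_mono nn_integral_mono\<close>)

lemma nn_integral_count_space_ge: "f x \<le> (\<integral>\<^sup>+y. f y \<partial>count_space UNIV)"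
proof -
  have "f x = (\<integral>\<^sup>+y. f y * indicator {x} y \<partial>count_space UNIV)" by simp
  also have "\<dots> \<le> (\<integral>\<^sup>+y. f y \<partial>count_space UNIV)"
    by (intro nn_integral_mono) (auto simp: indicator_def)
  finally show ?thesis .
qed

lemma lp_norm_ge:
  assumes "p > 0"
  shows "f x \<le> lp_norm p f"
  using assms
proof (cases rule: ereal_pos_cases)
  case 1
  then show ?thesis by (auto simp: lp_norm_def intro: SUP_upper)
next
  case (2 P)
  have "f x = epow (epow (f x) P) (1/P)" using 2 by simp
  also have "\<dots> \<le> epow (\<integral>\<^sup>+y. epow (f y) P \<partial>count_space UNIV) (1/P)"
    using 2 by (intro epow_mono nn_integral_count_space_ge) auto
  also have "\<dots> = lp_norm p f" using 2 by (simp add: lp_norm_def)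
  finally show ?thesis .
qed

lemma lp_norm_cmult:
  assumes "p > 0" "a \<ge> 0"
  shows "lp_norm p (\<lambda>x. ennreal a * f x) = ennreal a * lp_norm p f"
  using assms(1)
proof (cases rule: ereal_pos_cases)
  case 1
  then show ?thesis by (simp add: lp_norm_def SUP_mult_left_ennreal)
next
  case (2 P)
  have "lp_norm p (\<lambda>x. ennreal a * f x) =
      epow (epow (ennreal a) P * (\<integral>\<^sup>+x. epow (f x) P \<partial>count_space UNIV)) (1/P)"
    using 2 by (simp add: lp_norm_def epow_mult nn_integral_cmult)
  then show ?thesis using 2 by (simp add: lp_norm_def epow_mult)
qed

lemma lp_norm_single:
  assumes "p > 0"
  shows "lp_norm p (\<lambda>x. if x = x0 then a else 0) = a"
  using assms
proof (cases rule: ereal_pos_cases)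
  case 1
  have "(SUP x. if x = x0 then a else 0) = a"
    by (rule antisym) (auto intro!: SUP_least SUP_upper2[of x0])
  then show ?thesis using 1 by (simp add: lp_norm_def)
next
  case (2 P)
  have "(\<lambda>x. epow (if x = x0 then a else 0) P) = (\<lambda>x. epow a P * indicator {x0} x)"
    by (auto simp: fun_eq_iff)
  then show ?thesis using 2 by (simp add: lp_norm_def)
qed

lemma lp_norm_epow:
  assumes "r > 0" "p > 0"
  shows "lp_norm (p / ereal r) (\<lambda>x. epow (f x) r) = epow (lp_norm p f) r"
  using assms(2)
proof (cases rule: ereal_pos_cases)
  case 1
  then show ?thesis using assms by (simp add: lp_norm_def SUP_epow)
next
  case (2 P)
  then have "p / ereal r = ereal (P / r)" using assms by simp
  then show ?thesis using 2 assms by (simp add: lp_norm_def epow_epow)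
qed

lemma nn_integral_powr_convex_combination_le:
  fixes F G :: "'a \<Rightarrow> real"
  assumes "\<And>x. F x \<ge> 0" "\<And>x. G x \<ge> 0" "0 \<le> t" "t \<le> 1" "P \<ge> 1"
  shows "(\<integral>\<^sup>+x. ennreal (((1 - t) * F x + t * G x) powr P) \<partial>count_space UNIV)
    \<le> ennreal (1 - t) * (\<integral>\<^sup>+x. ennreal (F x powr P) \<partial>count_space UNIV)
      + ennreal t * (\<integral>\<^sup>+x. ennreal (G x powr P) \<partial>count_space UNIV)"
proof -
  have "(\<integral>\<^sup>+x. ennreal (((1 - t) * F x + t * G x) powr P) \<partial>count_space UNIV)
      \<le> (\<integral>\<^sup>+x. ennreal (1 - t) * ennreal (F x powr P) + ennreal t * ennreal (G x powr P) \<partial>count_space UNIV)"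
    using assms convex_combination_powr_le[of t "F _" "G _" P]
    by (intro nn_integral_mono)
       (simp add: ennreal_mult[symmetric] ennreal_plus[symmetric] del: ennreal_plus)
  also have "\<dots> = ennreal (1 - t) * (\<integral>\<^sup>+x. ennreal (F x powr P) \<partial>count_space UNIV)
      + ennreal t * (\<integral>\<^sup>+x. ennreal (G x powr P) \<partial>count_space UNIV)"
    by (simp add: nn_integral_add nn_integral_cmult)
  finally show ?thesis .
qed

lemma nn_integral_powr_add_le:
  fixes F G :: "'a \<Rightarrow> real"
  assumes F: "\<And>x. F x \<ge> 0" and G: "\<And>x. G x \<ge> 0" and P: "P \<ge> 1" and ab: "a > 0" "b > 0"
    and int_F: "(\<integral>\<^sup>+x. ennreal (F x powr P) \<partial>count_space UNIV) = ennreal (a powr P)"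
    and int_G: "(\<integral>\<^sup>+x. ennreal (G x powr P) \<partial>count_space UNIV) = ennreal (b powr P)"
  shows "(\<integral>\<^sup>+x. ennreal ((F x + G x) powr P) \<partial>count_space UNIV) \<le> ennreal ((a + b) powr P)"
proof -
  define t where "t = b / (a + b)"
  have t: "0 \<le> t" "t \<le> 1" "1 - t = a / (a + b)" using ab by (auto simp: t_def field_simps)
  have normalised: "(\<integral>\<^sup>+x. ennreal ((H x / c) powr P) \<partial>count_space UNIV) = 1"
    if "(\<integral>\<^sup>+x. ennreal (H x powr P) \<partial>count_space UNIV) = ennreal (c powr P)" "c > 0" "\<And>x. H x \<ge> 0"
    for H c
  proof -
    have "(\<integral>\<^sup>+x. ennreal ((H x / c) powr P) \<partial>count_space UNIV)
        = (\<integral>\<^sup>+x. ennreal (1 / c powr P) * ennreal (H x powr P) \<partial>count_space UNIV)"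
      using that by (simp add: powr_divide ennreal_mult[symmetric])
    also have "\<dots> = ennreal (1 / c powr P) * ennreal (c powr P)"
      using that(1,2) by (subst nn_integral_cmult) auto
    also have "\<dots> = 1"
      using that(2) by (simp add: ennreal_mult[symmetric])
    finally show ?thesis .
  qed
  have split: "F x + G x = (a + b) * ((1 - t) * (F x / a) + t * (G x / b))" for x
  proof -
    have "(1 - t) * (F x / a) = F x / (a + b)" "t * (G x / b) = G x / (a + b)"
      unfolding t(3) using ab by (simp_all add: t_def)
    then show ?thesis using ab by (simp add: add_divide_distrib[symmetric])
  qed
  have "(\<integral>\<^sup>+x. ennreal ((F x + G x) powr P) \<partial>count_space UNIV)
      = (\<integral>\<^sup>+x. ennreal ((a + b) powr P) * ennreal (((1 - t) * (F x / a) + t * (G x / b)) powr P)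
          \<partial>count_space UNIV)"
    using ab t F G by (simp add: split powr_mult ennreal_mult[symmetric])
  also have "\<dots> \<le> ennreal ((a + b) powr P) * (ennreal (1 - t) * 1 + ennreal t * 1)"
    using nn_integral_powr_convex_combination_le[of "\<lambda>x. F x / a" "\<lambda>x. G x / b" t P]
      normalised[OF int_F ab(1)] normalised[OF int_G ab(2)] ab t F G P
    by (simp add: nn_integral_cmult mult_left_mono)
  also have "\<dots> = ennreal ((a + b) powr P)"
    using t(1,2) by (simp add: ennreal_plus[symmetric] del: ennreal_plus)
  finally show ?thesis .
qed

lemma minkowski_count_space:
  fixes F G :: "'a \<Rightarrow> real" and P :: real
  assumes F: "\<And>x. F x \<ge> 0" and G: "\<And>x. G x \<ge> 0" and P: "P \<ge> 1"
  defines "nrm H \<equiv> epow (\<integral>\<^sup>+x. ennreal (H x powr P) \<partial>count_space UNIV) (1 / P)"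
  shows "nrm (\<lambda>x. F x + G x) \<le> nrm F + nrm G"
proof (cases "nrm F = top \<or> nrm G = top")
  case False
  then obtain a b where ab: "nrm F = ennreal a" "nrm G = ennreal b" "a \<ge> 0" "b \<ge> 0"
    by (cases "nrm F"; cases "nrm G") auto
  have integral: "(\<integral>\<^sup>+x. ennreal (H x powr P) \<partial>count_space UNIV) = ennreal (c powr P)"
    if "nrm H = ennreal c" "c \<ge> 0" for H c
    using arg_cong[OF that(1), of "\<lambda>y. epow y P"] that(2) P by (simp add: nrm_def epow_epow epow_ennreal)
  have vanish: "H = (\<lambda>x. 0)" if "nrm H = ennreal 0" "\<And>x. H x \<ge> 0" for H
  proof -
    have "\<forall>x. ennreal (H x powr P) = 0"
      using integral[OF that(1) order_refl] P by (simp add: nn_integral_0_iff_AE AE_count_space)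
    then show ?thesis using that(2) by (auto simp: fun_eq_iff)
  qed
  consider "a = 0" | "b = 0" | "a > 0" "b > 0" using ab by linarith
  then show ?thesis
  proof cases
    case 1
    then show ?thesis using vanish[of F] ab F by simp
  next
    case 2
    then show ?thesis using vanish[of G] ab G by simp
  next
    case 3
    then have "nrm (\<lambda>x. F x + G x) \<le> epow (ennreal ((a + b) powr P)) (1 / P)"
      unfolding nrm_def using P F G ab integral
      by (intro epow_mono nn_integral_powr_add_le) auto
    also have "\<dots> = nrm F + nrm G"
      using ab 3 P by (simp add: epow_ennreal powr_powr ennreal_plus[symmetric] del: ennreal_plus)
    finally show ?thesis .
  qed
qed auto

lemma lp_norm_triangle:
  assumes "p \<ge> 1"
  shows "lp_norm p (\<lambda>x. f x + g x) \<le> lp_norm p f + lp_norm p g"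
proof -
  have "p > 0" using assms by (cases p) auto
  then show ?thesis
  proof (cases rule: ereal_pos_cases)
    case 1
    then show ?thesis by (auto simp: lp_norm_def intro!: SUP_least add_mono SUP_upper)
  next
    case (2 P)
    have P: "P \<ge> 1" using 2 assms by simp
    have finite: "h x < top" if "lp_norm p h < top" for h x
    proof -
      have "epow (h x) P \<le> (\<integral>\<^sup>+y. epow (h y) P \<partial>count_space UNIV)"
        by (rule nn_integral_count_space_ge)
      also have "\<dots> < top" using that 2 by (simp add: lp_norm_def)
      finally show ?thesis by simp
    qed
    have real_valued: "lp_norm p (\<lambda>x. ennreal (H x))
        = epow (\<integral>\<^sup>+x. ennreal (H x powr P) \<partial>count_space UNIV) (1 / P)" if "\<And>x. H x \<ge> 0" for H
      using 2 that by (simp add: lp_norm_def epow_ennreal)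
    show ?thesis
    proof (cases "lp_norm p f < top \<and> lp_norm p g < top")
      case True
      obtain F G where FG: "f = (\<lambda>x. ennreal (F x))" "g = (\<lambda>x. ennreal (G x))"
        "\<And>x. F x \<ge> 0" "\<And>x. G x \<ge> 0"
      proof
        show "f = (\<lambda>x. ennreal (enn2real (f x)))" "g = (\<lambda>x. ennreal (enn2real (g x)))"
          using finite[of f] finite[of g] True by (auto simp: fun_eq_iff less_top)
      qed auto
      then show ?thesis
        using minkowski_count_space[of F G P] P real_valued[of F] real_valued[of G]
          real_valued[of "\<lambda>x. F x + G x"]
        by (simp add: add_nonneg_nonneg ennreal_plus[symmetric] del: ennreal_plus)
    qed (auto simp: less_top[symmetric])
  qed
qed

text \<open>This replaces the triangle inequality when $p < 1$.\<close>

lemma lp_norm_powr_triangle: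
  assumes "0 < r" "r \<le> 1" "ereal r \<le> p"
  shows "epow (lp_norm p (\<lambda>x. f x + g x)) r \<le> epow (lp_norm p f) r + epow (lp_norm p g) r"
proof -
  have p: "p > 0" using assms by (cases p) auto
  have pr: "p / ereal r \<ge> 1" using assms by (cases p) auto
  then have "p / ereal r > 0" by (cases "p / ereal r") auto
  have "epow (lp_norm p (\<lambda>x. f x + g x)) r = lp_norm (p / ereal r) (\<lambda>x. epow (f x + g x) r)"
    by (rule lp_norm_epow[OF assms(1) p, symmetric])
  also have "\<dots> \<le> lp_norm (p / ereal r) (\<lambda>x. epow (f x) r + epow (g x) r)"
    using assms \<open>p / ereal r > 0\<close> by (intro lp_norm_mono epow_add_le) auto
  also have "\<dots> \<le> lp_norm (p / ereal r) (\<lambda>x. epow (f x) r) + lp_norm (p / ereal r) (\<lambda>x. epow (g x) r)"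
    using pr by (rule lp_norm_triangle)
  also have "\<dots> = epow (lp_norm p f) r + epow (lp_norm p g) r"
    by (simp only: lp_norm_epow[OF assms(1) p])
  finally show ?thesis .
qed

section \<open>The sequence space $b^{s,q}_p$\<close>

definition bweight :: "'d::finite itself \<Rightarrow> real \<Rightarrow> ereal \<Rightarrow> nat \<Rightarrow> real" where
  "bweight T s p j = 2 powr ((s - dp T p) * real j)"

lemma bweight_pos [simp]: "bweight T s p j > 0"
  by (simp add: bweight_def)

lemma bweight_nonneg [simp]: "bweight T s p j \<ge> 0"
  by (simp add: bweight_def)

lemma bweight_neq_0 [simp]: "bweight T s p j \<noteq> 0"
  by (simp add: bweight_def)

lemma level_norm_eq_lp_norm:
  fixes c :: "('i, 'd::finite) coeffs"
  assumes "p > 0"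
  shows "level_norm s p c j
    = lp_norm p (\<lambda>ik. ennreal (cmod (c (fst ik) j (snd ik)) * bweight TYPE('d) s p j))"
  using assms
  by (cases rule: ereal_pos_cases) (simp_all add: level_norm_def lp_norm_def bweight_def epow_ennreal)

lemma bnorm_eq_lp_norm: "bnorm s p q c = lp_norm q (level_norm s p c)"
  by (simp add: bnorm_def lp_norm_def)

lemma coeff_le_bnorm:
  fixes c :: "('i, 'd::finite) coeffs"
  assumes "p > 0" "q > 0"
  shows "ennreal (cmod (c i j k) * bweight TYPE('d) s p j) \<le> bnorm s p q c"
proof -
  have "ennreal (cmod (c i j k) * bweight TYPE('d) s p j) \<le> level_norm s p c j"
    unfolding level_norm_eq_lp_norm[OF assms(1)]
    using lp_norm_ge[OF assms(1), of "\<lambda>ik. ennreal (cmod (c (fst ik) j (snd ik)) * bweight TYPE('d) s p j)" "(i, k)"]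
    by simp
  also have "\<dots> \<le> bnorm s p q c"
    by (simp add: bnorm_eq_lp_norm lp_norm_ge assms(2))
  finally show ?thesis .
qed

definition subadd_exp :: "ereal \<Rightarrow> ereal \<Rightarrow> real" where
  "subadd_exp p q = min 1 (min (if p = \<infinity> then 1 else real_of_ereal p) (if q = \<infinity> then 1 else real_of_ereal q))"

lemma subadd_exp:
  assumes "p > 0" "q > 0"
  shows "0 < subadd_exp p q" "subadd_exp p q \<le> 1" "ereal (subadd_exp p q) \<le> p" "ereal (subadd_exp p q) \<le> q"
  using assms by (auto simp: subadd_exp_def min_le_iff_disj elim!: ereal_pos_cases)

lemma bnorm_cscale:
  fixes c :: "('i, 'd::finite) coeffs"
  assumes "p > 0" "q > 0"
  shows "bnorm s p q (cscale t c) = ennreal (cmod t) * bnorm s p q c"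
proof -
  have "level_norm s p (cscale t c) = (\<lambda>j. ennreal (cmod t) * level_norm s p c j)"
    using assms
    by (simp add: fun_eq_iff level_norm_eq_lp_norm lp_norm_cmult[symmetric] cscale_def norm_mult
        ennreal_mult' mult.assoc)
  then show ?thesis using assms by (simp add: bnorm_eq_lp_norm lp_norm_cmult)
qed

lemma bnorm_eq_0_iff:
  fixes c :: "('i, 'd::finite) coeffs"
  assumes "p > 0" "q > 0"
  shows "bnorm s p q c = 0 \<longleftrightarrow> c = 0"
proof
  assume "bnorm s p q c = 0"
  then have "cmod (c i j k) * bweight TYPE('d) s p j \<le> 0" for i j k
    using coeff_le_bnorm[OF assms, of c i j k s] by (simp add: ennreal_eq_0_iff)
  then have "c i j k = 0" for i j k
    by (metis bweight_pos mult_le_0_iff norm_le_zero_iff not_le)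
  then show "c = 0" by (simp add: fun_eq_iff)
next
  assume "c = 0"
  then show "bnorm s p q c = 0"
    using bnorm_cscale[OF assms, of s 0 c] by (simp add: cscale_def zero_fun_def)
qed

lemma bnorm_uminus:
  fixes c :: "('i, 'd::finite) coeffs"
  assumes "p > 0" "q > 0"
  shows "bnorm s p q (- c) = bnorm s p q c"
  using bnorm_cscale[OF assms, of s "-1" c] by (simp add: cscale_def fun_Compl_def)

definition single_coeff :: "'i \<Rightarrow> nat \<Rightarrow> int ^ 'd \<Rightarrow> complex \<Rightarrow> ('i, 'd) coeffs" where
  "single_coeff i j k v = (\<lambda>i' j' k'. if (i', j', k') = (i, j, k) then v else 0)"

lemma bnorm_single_coeff:
  assumes "p > 0" "q > 0"
  shows "bnorm s p q (single_coeff i j k v :: ('i, 'd::finite) coeffs)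
    = ennreal (cmod v * bweight TYPE('d) s p j)"
proof -
  have single: "(\<lambda>ik. ennreal (cmod (single_coeff i j k v (fst ik) j' (snd ik)) * bweight TYPE('d) s p j'))
      = (\<lambda>ik. if ik = (i, k) then (if j' = j then ennreal (cmod v * bweight TYPE('d) s p j) else 0) else 0)"
    for j'
    by (auto simp: single_coeff_def fun_eq_iff)
  have "level_norm s p (single_coeff i j k v :: ('i, 'd) coeffs) j'
      = (if j' = j then ennreal (cmod v * bweight TYPE('d) s p j) else 0)" for j'
    unfolding level_norm_eq_lp_norm[OF assms(1)] single by (rule lp_norm_single[OF assms(1)])
  then have "level_norm s p (single_coeff i j k v :: ('i, 'd) coeffs)
      = (\<lambda>j'. if j' = j then ennreal (cmod v * bweight TYPE('d) s p j) else 0)" ..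
  then show ?thesis
    using lp_norm_single[OF assms(2)] by (simp add: bnorm_eq_lp_norm)
qed

lemma bnorm_powr_triangle:
  fixes a b :: "('i, 'd::finite) coeffs"
  assumes "p > 0" "q > 0"
  defines "r \<equiv> subadd_exp p q"
  shows "epow (bnorm s p q (a + b)) r \<le> epow (bnorm s p q a) r + epow (bnorm s p q b) r"
proof -
  note r = subadd_exp[OF assms(1,2), folded r_def]
  define u v where "u j = epow (level_norm s p a j) r" and "v j = epow (level_norm s p b j) r" for j
  have level: "level_norm s p (a + b) j \<le> epow (u j + v j) (1/r)" for j
  proof -
    have "level_norm s p (a + b) j
        \<le> lp_norm p (\<lambda>ik. ennreal (cmod (a (fst ik) j (snd ik)) * bweight TYPE('d) s p j)
                          + ennreal (cmod (b (fst ik) j (snd ik)) * bweight TYPE('d) s p j))"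
      unfolding level_norm_eq_lp_norm[OF assms(1)]
      by (intro lp_norm_mono assms)
         (simp add: ennreal_plus[symmetric] distrib_right[symmetric] mult_right_mono
           norm_triangle_ineq less_imp_le del: ennreal_plus)
    then have "epow (level_norm s p (a + b) j) r
        \<le> epow (lp_norm p (\<lambda>ik. ennreal (cmod (a (fst ik) j (snd ik)) * bweight TYPE('d) s p j)
                          + ennreal (cmod (b (fst ik) j (snd ik)) * bweight TYPE('d) s p j))) r"
      by (rule epow_mono[OF r(1)])
    also have "\<dots> \<le> u j + v j"
      unfolding u_def v_def level_norm_eq_lp_norm[OF assms(1)] by (rule lp_norm_powr_triangle[OF r(1-3)])
    finally have "epow (level_norm s p (a + b) j) r \<le> u j + v j" .
    then show ?thesis
      using r epow_mono[of "1/r" "epow (level_norm s p (a + b) j) r"] by simp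
  qed
  have qr: "q / ereal r \<ge> 1" using r by (cases q) auto
  have "epow (bnorm s p q (a + b)) r \<le> epow (lp_norm q (\<lambda>j. epow (u j + v j) (1/r))) r"
    unfolding bnorm_eq_lp_norm using r assms by (intro epow_mono lp_norm_mono level) auto
  also have "\<dots> = lp_norm (q / ereal r) (\<lambda>j. u j + v j)"
    using lp_norm_epow[of r q "\<lambda>j. epow (u j + v j) (1/r)"] r assms by (simp add: epow_epow)
  also have "\<dots> \<le> lp_norm (q / ereal r) u + lp_norm (q / ereal r) v"
    using qr by (rule lp_norm_triangle)
  also have "\<dots> = epow (bnorm s p q a) r + epow (bnorm s p q b) r"
    unfolding u_def v_def bnorm_eq_lp_norm by (simp only: lp_norm_epow[OF r(1) assms(2)])
  finally show ?thesis .
qed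

lemma bspace_add:
  assumes "p > 0" "q > 0" "a \<in> bspace s p q" "b \<in> bspace s p q"
  shows "a + b \<in> bspace s p q"
proof -
  have "epow (bnorm s p q a) (subadd_exp p q) + epow (bnorm s p q b) (subadd_exp p q) < top"
    using assms(3,4) by (simp add: bspace_def)
  then have "epow (bnorm s p q (a + b)) (subadd_exp p q) < top"
    using bnorm_powr_triangle[OF assms(1,2), of s a b] by (rule le_less_trans[rotated])
  then show ?thesis by (simp add: bspace_def)
qed

lemma bspace_cscale:
  assumes "p > 0" "q > 0" "a \<in> bspace s p q"
  shows "cscale t a \<in> bspace s p q"
  using assms by (simp add: bspace_def bnorm_cscale ennreal_mult_less_top)

lemma bspace_uminus:
  assumes "p > 0" "q > 0" "a \<in> bspace s p q"
  shows "- a \<in> bspace s p q"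
  using assms by (simp add: bspace_def bnorm_uminus)

lemma bspace_diff:
  assumes "p > 0" "q > 0" "a \<in> bspace s p q" "b \<in> bspace s p q"
  shows "a - b \<in> bspace s p q"
  using bspace_add[OF assms(1,2,3) bspace_uminus[OF assms(1,2,4)]] by simp

lemma single_coeff_in_bspace:
  assumes "p > 0" "q > 0"
  shows "single_coeff i j k v \<in> bspace s p q"
  using assms by (simp add: bspace_def bnorm_single_coeff)

lemma vector_space_cscale: "vector_space (cscale :: complex \<Rightarrow> ('i, 'd) coeffs \<Rightarrow> ('i, 'd) coeffs)"
  by unfold_locales (auto simp: cscale_def fun_eq_iff algebra_simps)

lemma module_cscale: "module (cscale :: complex \<Rightarrow> ('i, 'd) coeffs \<Rightarrow> ('i, 'd) coeffs)"
  using vector_space_cscale by (simp add: module_iff_vector_space)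

lemma subspace_bspace:
  assumes "p > 0" "q > 0"
  shows "module.subspace cscale (bspace s p q :: ('i, 'd::finite) coeffs set)"
proof -
  have "(0 :: ('i, 'd) coeffs) \<in> bspace s p q"
    using bnorm_eq_0_iff[OF assms, of s "0 :: ('i, 'd) coeffs"] by (simp add: bspace_def)
  then show ?thesis
    unfolding module.subspace_def[OF module_cscale]
    using bspace_add[OF assms] bspace_cscale[OF assms] by blast
qed

definition bdist :: "real \<Rightarrow> ereal \<Rightarrow> ereal \<Rightarrow> ('i, 'd::finite) coeffs \<Rightarrow> ('i, 'd) coeffs \<Rightarrow> real" where
  "bdist s p q a b = enn2real (bnorm s p q (a - b)) powr subadd_exp p q"

locale bseq =
  fixes s :: real and p q :: ereal
  assumes p_pos: "p > 0" and q_pos: "q > 0"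
begin

abbreviation r :: real where "r \<equiv> subadd_exp p q"

lemmas r_bounds = subadd_exp[OF p_pos q_pos]

lemma ennreal_enn2real_bnorm: "c \<in> bspace s p q \<Longrightarrow> bnorm s p q c = ennreal (enn2real (bnorm s p q c))"
  by (simp add: bspace_def less_top)

lemma coeff_le_enn2real_bnorm:
  fixes c :: "('i, 'd::finite) coeffs"
  assumes "c \<in> bspace s p q"
  shows "cmod (c i j k) * bweight TYPE('d) s p j \<le> enn2real (bnorm s p q c)"
  using coeff_le_bnorm[OF p_pos q_pos, of c i j k s] ennreal_enn2real_bnorm[OF assms]
  by (metis ennreal_le_iff enn2real_nonneg)

lemma bdist_triangle:
  assumes "a \<in> bspace s p q" "b \<in> bspace s p q" "c \<in> bspace s p q"
  shows "bdist s p q a c \<le> bdist s p q a b + bdist s p q b c"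
proof -
  have E: "a - b \<in> bspace s p q" "b - c \<in> bspace s p q" "a - c \<in> bspace s p q"
    using assms by (simp_all add: bspace_diff p_pos q_pos)
  have "epow (bnorm s p q ((a - b) + (b - c))) r \<le> epow (bnorm s p q (a - b)) r + epow (bnorm s p q (b - c)) r"
    by (rule bnorm_powr_triangle[OF p_pos q_pos])
  then have "ennreal (bdist s p q a c) \<le> ennreal (bdist s p q a b) + ennreal (bdist s p q b c)"
    by (subst (asm) (1 2 3) ennreal_enn2real_bnorm) (simp_all add: E epow_ennreal bdist_def)
  then show ?thesis by (simp add: bdist_def ennreal_plus[symmetric] del: ennreal_plus)
qed

lemma Metric_space_bdist: "Metric_space (bspace s p q :: ('i, 'd::finite) coeffs set) (bdist s p q)"
proof
  fix a b :: "('i, 'd) coeffs"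
  show "0 \<le> bdist s p q a b" by (simp add: bdist_def)
  show "bdist s p q a b = bdist s p q b a"
    using bnorm_uminus[OF p_pos q_pos, of s "b - a"] by (simp add: bdist_def)
  assume "a \<in> bspace s p q" "b \<in> bspace s p q"
  then have "a - b \<in> bspace s p q" by (simp add: bspace_diff p_pos q_pos)
  then show "bdist s p q a b = 0 \<longleftrightarrow> a = b"
    using ennreal_enn2real_bnorm[of "a - b"] bnorm_eq_0_iff[OF p_pos q_pos, of s "a - b"] r_bounds(1)
    by (auto simp: bdist_def enn2real_eq_0_iff)
qed (rule bdist_triangle)

lemma bnorm_ball_eq_mball:
  fixes c :: "('i, 'd::finite) coeffs"
  assumes "c \<in> bspace s p q" "\<epsilon> > 0"
  shows "{c' \<in> bspace s p q. bnorm s p q (c' - c) < ennreal \<epsilon>}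
    = Metric_space.mball (bspace s p q) (bdist s p q) c (\<epsilon> powr r)"
proof -
  have "bnorm s p q (c' - c) < ennreal \<epsilon> \<longleftrightarrow> bdist s p q c c' < \<epsilon> powr r"
    if "c' \<in> bspace s p q" for c'
  proof -
    have "c - c' \<in> bspace s p q" using assms that by (simp add: bspace_diff p_pos q_pos)
    then obtain x where x: "bnorm s p q (c - c') = ennreal x" "x \<ge> 0"
      by (cases "bnorm s p q (c - c')") (auto simp: bspace_def)
    moreover have "bnorm s p q (c' - c) = bnorm s p q (c - c')"
      using bnorm_uminus[OF p_pos q_pos, of s "c - c'"] by simp
    ultimately show ?thesis
      using assms(2) r_bounds(1) by (simp add: bdist_def powr_less_powr_iff ennreal_less_iff)
  qed
  then show ?thesis using assms(1)
    by (auto simp: Metric_space.in_mball[OF Metric_space_bdist])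
qed

lemma btop_eq_mtopology:
  "btop s p q = Metric_space.mtopology (bspace s p q :: ('i, 'd::finite) coeffs set) (bdist s p q)"
proof -
  interpret M: Metric_space "bspace s p q :: ('i, 'd) coeffs set" "bdist s p q"
    by (rule Metric_space_bdist)
  let ?balls = "{{c' \<in> bspace s p q. bnorm s p q (c' - c) < ennreal \<epsilon>} | c \<epsilon>.
    c \<in> bspace s p q \<and> \<epsilon> > 0} :: ('i, 'd) coeffs set set"
  have "openin (btop s p q) U \<longleftrightarrow> openin M.mtopology U" for U
  proof
    assume "openin (btop s p q) U"
    then have "generate_topology_on ?balls U"
      unfolding btop_def by (rule openin_topology_generated_by)
    then show "openin M.mtopology U"
      by (rule generate_topology_on_coarsest[where T = "openin M.mtopology", OF istopology_openin, rotated])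
         (auto simp: bnorm_ball_eq_mball)
  next
    assume "openin M.mtopology U"
    then have "\<exists>V. openin (btop s p q) V \<and> x \<in> V \<and> V \<subseteq> U" if "x \<in> U" for x
    proof -
      obtain \<delta> where \<delta>: "\<delta> > 0" "M.mball x \<delta> \<subseteq> U" "x \<in> bspace s p q"
        using \<open>openin M.mtopology U\<close> \<open>x \<in> U\<close> M.openin_mtopology by blast
      then have "M.mball x \<delta> = {c' \<in> bspace s p q. bnorm s p q (c' - x) < ennreal (\<delta> powr (1 / r))}"
        using bnorm_ball_eq_mball[of x "\<delta> powr (1 / r)"] r_bounds(1) by (simp add: powr_powr)
      moreover have "\<delta> powr (1 / r) > 0" using \<delta>(1) by simp
      ultimately have "M.mball x \<delta> \<in> ?balls" using \<delta>(3) by blast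
      then show ?thesis
        unfolding btop_def using \<delta> by (intro exI[of _ "M.mball x \<delta>"]) (auto intro: topology_generated_by_Basis)
    qed
    then show "openin (btop s p q) U" by (subst openin_subopen) blast
  qed
  then show ?thesis by (simp add: topology_eq)
qed

lemma topspace_btop [simp]: "topspace (btop s p q) = bspace s p q"
  using Metric_space.topspace_mtopology[OF Metric_space_bdist] by (simp add: btop_eq_mtopology)

lemma sigma_algebra_borel_btop:
  "sigma_algebra (bspace s p q :: ('i, 'd::finite) coeffs set) (borel_sets (btop s p q))"
  unfolding borel_sets_def topspace_btop[symmetric]
  by (intro sigma_algebra_sigma_sets) (use openin_subset[of "btop s p q"] in force)

lemma openin_btop_coeff:
  fixes V :: "complex set"
  assumes "open V"
  shows "openin (btop s p q) {c \<in> bspace s p q :: ('i, 'd::finite) coeffs set. c i j k \<in> V}"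
    (is "openin _ ?U")
proof -
  interpret M: Metric_space "bspace s p q :: ('i, 'd) coeffs set" "bdist s p q"
    by (rule Metric_space_bdist)
  have "\<exists>\<delta>>0. M.mball c \<delta> \<subseteq> ?U" if "c \<in> ?U" for c
  proof -
    have "c i j k \<in> V" using that by simp
    then obtain \<epsilon> where \<epsilon>: "\<epsilon> > 0" "\<And>z. dist z (c i j k) < \<epsilon> \<Longrightarrow> z \<in> V"
      using assms unfolding open_dist by blast
    define w where "w = bweight TYPE('d) s p j"
    have "c' \<in> ?U" if "c' \<in> M.mball c ((\<epsilon> * w) powr r)" for c'
    proof -
      have c': "c \<in> bspace s p q" "c' \<in> bspace s p q" "c - c' \<in> bspace s p q"
        using that by (auto simp: bspace_diff p_pos q_pos)
      have "enn2real (bnorm s p q (c - c')) powr r < (\<epsilon> * w) powr r"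
        using that by (simp add: bdist_def)
      then have "enn2real (bnorm s p q (c - c')) < \<epsilon> * w"
        using r_bounds(1) \<epsilon>(1) by (subst (asm) powr_less_powr_iff) (simp_all add: w_def less_imp_le)
      then have "cmod ((c - c') i j k) * w < \<epsilon> * w"
        using coeff_le_enn2real_bnorm[OF c'(3), of i j k] unfolding w_def by linarith
      then have "cmod (c i j k - c' i j k) < \<epsilon>" by (simp add: w_def)
      then show ?thesis using \<epsilon>(2) c' by (simp add: w_def dist_norm norm_minus_commute)
    qed
    moreover have "(\<epsilon> * w) powr r > 0" using \<epsilon>(1) by (simp add: w_def)
    ultimately show ?thesis by (intro exI[of _ "(\<epsilon> * w) powr r"]) auto
  qed
  then show ?thesis by (auto simp: btop_eq_mtopology M.openin_mtopology)
qed

lemma Hausdorff_space_btop: "Hausdorff_space (btop s p q)"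
  using Metric_space.Hausdorff_space_mtopology[OF Metric_space_bdist] by (simp add: btop_eq_mtopology)

lemma continuous_map_btop_line:
  fixes g :: "('i, 'd::finite) coeffs"
  assumes g: "g \<in> bspace s p q"
  shows "continuous_map euclideanreal (btop s p q) (\<lambda>t. cscale (of_real t) g)"
proof -
  interpret M: Metric_space "bspace s p q :: ('i, 'd) coeffs set" "bdist s p q"
    by (rule Metric_space_bdist)
  define G where "G = enn2real (bnorm s p q g)"
  have G: "G \<ge> 0" by (simp add: G_def)
  have line: "cscale (of_real t) g \<in> bspace s p q" for t
    using g by (simp add: bspace_cscale p_pos q_pos)
  have dist: "bdist s p q (cscale (of_real t) g) (cscale (of_real t') g) = (\<bar>t - t'\<bar> * G) powr r" for t t'
  proof -
    have "cscale (of_real t) g - cscale (of_real t') g = cscale (of_real (t - t')) g"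
      by (simp add: cscale_def fun_eq_iff algebra_simps)
    then show ?thesis
      using ennreal_enn2real_bnorm[OF g]
      by (simp add: bdist_def bnorm_cscale p_pos q_pos G_def ennreal_mult[symmetric] enn2real_mult
          del: of_real_diff)
  qed
  have "\<exists>U. open U \<and> t \<in> U \<and> (\<forall>t'\<in>U. bdist s p q (cscale (of_real t) g) (cscale (of_real t') g) < \<epsilon>)"
    if "\<epsilon> > 0" for t \<epsilon>
  proof (intro exI[of _ "ball t (\<epsilon> powr (1 / r) / (G + 1))"] conjI ballI)
    show "open (ball t (\<epsilon> powr (1 / r) / (G + 1)))" by simp
    show "t \<in> ball t (\<epsilon> powr (1 / r) / (G + 1))" using that G by simp
    fix t' assume "t' \<in> ball t (\<epsilon> powr (1 / r) / (G + 1))"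
    then have "\<bar>t - t'\<bar> * (G + 1) < \<epsilon> powr (1 / r)"
      using G by (simp add: dist_real_def pos_less_divide_eq)
    moreover have "\<bar>t - t'\<bar> * G \<le> \<bar>t - t'\<bar> * (G + 1)" by (simp add: mult_left_mono)
    ultimately have "\<bar>t - t'\<bar> * G < \<epsilon> powr (1 / r)" by linarith
    then have "(\<bar>t - t'\<bar> * G) powr r < (\<epsilon> powr (1 / r)) powr r"
      using r_bounds(1) G by (simp add: powr_less_powr_iff)
    then show "bdist s p q (cscale (of_real t) g) (cscale (of_real t') g) < \<epsilon>"
      using r_bounds(1) that by (simp add: dist powr_powr)
  qed
  then show ?thesis
    unfolding btop_eq_mtopology M.continuous_map_to_metric using line by auto
qed

lemma borel_sets_btop_compactin:
  assumes "compactin (btop s p q) K"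
  shows "K \<in> borel_sets (btop s p q)"
proof -
  interpret sigma_algebra "bspace s p q :: ('i, 'd::finite) coeffs set" "borel_sets (btop s p q)"
    by (rule sigma_algebra_borel_btop)
  have "closedin (btop s p q) K" by (rule compactin_imp_closedin[OF Hausdorff_space_btop assms])
  then have "bspace s p q - K \<in> borel_sets (btop s p q)"
    by (auto simp: closedin_def borel_sets_def)
  then have "bspace s p q - (bspace s p q - K) \<in> borel_sets (btop s p q)" by (rule compl_sets)
  moreover have "K \<subseteq> bspace s p q" using compactin_subset_topspace[OF assms] by simp
  ultimately show ?thesis by (simp add: Diff_Diff_Int inf.absorb2)
qed

lemma sets_measure_of_btop:
  "sets (measure_of (bspace s p q :: ('i, 'd::finite) coeffs set) {U. openin (btop s p q) U} \<mu>)
    = borel_sets (btop s p q)"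
  unfolding borel_sets_def topspace_btop
  by (rule sets_measure_of) (use openin_subset[of "btop s p q"] in force)

lemma measurable_line_btop:
  fixes g :: "('i, 'd::finite) coeffs"
  assumes "g \<in> bspace s p q"
  shows "(\<lambda>t. cscale (of_real t) g) \<in> measurable (restrict_space lborel {0..1})
    (measure_of (bspace s p q) {U. openin (btop s p q) U} \<mu>)"
proof (rule measurable_measure_of)
  show "{U. openin (btop s p q) U} \<subseteq> Pow (bspace s p q :: ('i, 'd) coeffs set)"
    using openin_subset[of "btop s p q"] by force
  show "(\<lambda>t. cscale (of_real t) g) \<in> space (restrict_space lborel {0..1}) \<rightarrow> bspace s p q"
    using assms by (simp add: bspace_cscale p_pos q_pos)
  fix U :: "('i, 'd) coeffs set" assume "U \<in> {U. openin (btop s p q) U}"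
  then have "open ((\<lambda>t. cscale (of_real t) g) -` U)"
    using continuous_map_btop_line[OF assms] by (simp add: continuous_map_def vimage_def)
  then show "(\<lambda>t. cscale (of_real t) g) -` U \<inter> space (restrict_space lborel {0..1})
      \<in> sets (restrict_space lborel {0..1})"
    by (auto simp: sets_restrict_space space_restrict_space)
qed

text \<open>The probe is the uniform distribution on the segment $\{t g : 0 \le t \le 1\}$.\<close>

lemma haar_null_borel_by_line:
  fixes A :: "('i, 'd::finite) coeffs set"
  assumes A: "A \<in> borel_sets (btop s p q)" and g: "g \<in> bspace s p q"
    and countable: "\<And>x. x \<in> bspace s p q \<Longrightarrow> countable {t. cscale (of_real t) g \<in> (\<lambda>a. x + a) ` A}"
  shows "haar_null_borel (btop s p q) A"
proof -
  define line where "line t = cscale (of_real t) g" for t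
  define L where "L = restrict_space lborel {0..1::real}"
  define B where "B = measure_of (bspace s p q :: ('i, 'd) coeffs set) {U. openin (btop s p q) U} (\<lambda>_. 0)"
  define \<mu> where "\<mu> = distr L B line"
  have line_in: "line t \<in> bspace s p q" for t
    using g by (simp add: line_def bspace_cscale p_pos q_pos)
  have space_\<mu>: "space \<mu> = bspace s p q" and sets_\<mu>: "sets \<mu> = borel_sets (btop s p q)"
    by (simp_all add: \<mu>_def B_def space_measure_of_conv sets_measure_of_btop)
  have measure_\<mu>: "emeasure \<mu> C = emeasure lborel (line -` C \<inter> {0..1})" if "C \<in> sets \<mu>" for C
  proof -
    have "line \<in> measurable L B"
      unfolding line_def L_def B_def by (rule measurable_line_btop[OF g])
    then show ?thesis
      using that by (simp add: \<mu>_def L_def emeasure_distr space_restrict_space emeasure_restrict_space)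
  qed
  define K where "K = line ` {0..1}"
  have compact_K: "compactin (btop s p q) K"
    unfolding K_def line_def by (rule image_compactin[OF _ continuous_map_btop_line[OF g]]) simp
  then have K_sets: "K \<in> sets \<mu>" by (simp add: sets_\<mu> borel_sets_btop_compactin)
  have "line -` K \<inter> {0..1} = {0..1}" by (auto simp: K_def)
  then have "emeasure \<mu> K = 1" using measure_\<mu>[OF K_sets] by simp
  moreover have "line -` bspace s p q \<inter> {0..1} = {0..1}" using line_in by auto
  then have "emeasure \<mu> (space \<mu>) = 1"
    using measure_\<mu>[OF sets.top] by (simp add: space_\<mu>)
  moreover have "emeasure \<mu> ((\<lambda>a. x + a) ` A) = 0" if "x \<in> bspace s p q" for x
  proof (cases "(\<lambda>a. x + a) ` A \<in> sets \<mu>")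
    case True
    have "countable (line -` ((\<lambda>a. x + a) ` A) \<inter> {0..1})"
      using countable[OF that] by (rule countable_subset[rotated]) (auto simp: line_def)
    then show ?thesis using measure_\<mu>[OF True] by (simp add: emeasure_lborel_countable)
  qed (rule emeasure_notin_sets)
  ultimately show ?thesis
    unfolding haar_null_borel_def using A compact_K K_sets space_\<mu> sets_\<mu>
    by (intro conjI exI[of _ \<mu>]) auto
qed

end

section \<open>Divergence rates\<close>

definition grows_at_rate :: "('i \<Rightarrow> real ^ 'd \<Rightarrow> complex) \<Rightarrow> ('i, 'd) coeffs \<Rightarrow> real ^ 'd \<Rightarrow> real \<Rightarrow> bool" where
  "grows_at_rate \<psi> c x \<gamma> \<longleftrightarrow>
     (\<exists>C>0. \<forall>J. \<exists>i j k. J \<le> j \<and> C * 2 powr (\<gamma> * real j) \<le> cmod (c i j k * wav \<psi> i j k x))"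

lemma div_exp_eq_Sup_rates: "div_exp \<psi> c x = Sup (ereal ` {\<gamma>. grows_at_rate \<psi> c x \<gamma>})"
proof -
  have "(\<exists>ii js ks. filterlim js at_top sequentially \<and>
          (\<forall>n. C * 2 powr (\<gamma> * real (js n)) \<le> cmod (c (ii n) (js n) (ks n) * wav \<psi> (ii n) (js n) (ks n) x)))
    \<longleftrightarrow> (\<forall>J. \<exists>i j k. J \<le> j \<and> C * 2 powr (\<gamma> * real j) \<le> cmod (c i j k * wav \<psi> i j k x))"
    for C \<gamma>
  proof
    assume "\<exists>ii js ks. filterlim js at_top sequentially \<and>
      (\<forall>n. C * 2 powr (\<gamma> * real (js n)) \<le> cmod (c (ii n) (js n) (ks n) * wav \<psi> (ii n) (js n) (ks n) x))"
    then obtain ii js ks where lim: "filterlim js at_top sequentially"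
      and large: "\<forall>n. C * 2 powr (\<gamma> * real (js n)) \<le> cmod (c (ii n) (js n) (ks n) * wav \<psi> (ii n) (js n) (ks n) x)"
      by (elim exE conjE)
    moreover have "\<exists>n. J \<le> js n" for J
    proof -
      have "eventually (\<lambda>n. J \<le> js n) sequentially" using lim by (simp add: filterlim_at_top)
      then show ?thesis by (auto simp: eventually_sequentially)
    qed
    ultimately show "\<forall>J. \<exists>i j k. J \<le> j \<and> C * 2 powr (\<gamma> * real j) \<le> cmod (c i j k * wav \<psi> i j k x)"
      by blast
  next
    assume "\<forall>J. \<exists>i j k. J \<le> j \<and> C * 2 powr (\<gamma> * real j) \<le> cmod (c i j k * wav \<psi> i j k x)"
    then obtain ii js ks where seq: "\<And>J. J \<le> js J"
      "\<And>J. C * 2 powr (\<gamma> * real (js J)) \<le> cmod (c (ii J) (js J) (ks J) * wav \<psi> (ii J) (js J) (ks J) x)"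
      by metis
    have "filterlim js at_top sequentially"
      by (rule filterlim_at_top_mono[OF filterlim_ident]) (simp add: seq(1))
    then show "\<exists>ii js ks. filterlim js at_top sequentially \<and>
      (\<forall>n. C * 2 powr (\<gamma> * real (js n)) \<le> cmod (c (ii n) (js n) (ks n) * wav \<psi> (ii n) (js n) (ks n) x))"
      using seq(2) by blast
  qed
  then show ?thesis unfolding div_exp_def grows_at_rate_def by simp
qed

lemma grows_at_rate_mono:
  assumes "grows_at_rate \<psi> c x \<gamma>" "\<gamma>' \<le> \<gamma>"
  shows "grows_at_rate \<psi> c x \<gamma>'"
proof -
  have "C * 2 powr (\<gamma>' * real j) \<le> C * 2 powr (\<gamma> * real j)" if "C > 0" for C j
    using assms(2) that by (intro mult_left_mono powr_mono mult_right_mono) auto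
  then show ?thesis using assms(1) unfolding grows_at_rate_def by (meson order_trans)
qed

lemma grows_at_rate_add:
  assumes "grows_at_rate \<psi> (a + b) x \<gamma>"
  shows "grows_at_rate \<psi> a x \<gamma> \<or> grows_at_rate \<psi> b x \<gamma>"
proof (rule ccontr)
  assume neither: "\<not> (grows_at_rate \<psi> a x \<gamma> \<or> grows_at_rate \<psi> b x \<gamma>)"
  obtain C where C: "C > 0"
    "\<And>J. \<exists>i j k. J \<le> j \<and> C * 2 powr (\<gamma> * real j) \<le> cmod ((a + b) i j k * wav \<psi> i j k x)"
    using assms unfolding grows_at_rate_def by blast
  have small: "\<exists>J. \<forall>i j k. J \<le> j \<longrightarrow> cmod (f i j k * wav \<psi> i j k x) < C/2 * 2 powr (\<gamma> * real j)"
    if "\<not> grows_at_rate \<psi> f x \<gamma>" for f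
  proof -
    have "\<not> (\<forall>J. \<exists>i j k. J \<le> j \<and> C/2 * 2 powr (\<gamma> * real j) \<le> cmod (f i j k * wav \<psi> i j k x))"
      using that half_gt_zero[OF C(1)] unfolding grows_at_rate_def by blast
    then show ?thesis by (simp add: not_le) (meson not_le)
  qed
  obtain Ja where
    Ja: "\<And>i j k. Ja \<le> j \<Longrightarrow> cmod (a i j k * wav \<psi> i j k x) < C/2 * 2 powr (\<gamma> * real j)"
    using small neither by blast
  obtain Jb where
    Jb: "\<And>i j k. Jb \<le> j \<Longrightarrow> cmod (b i j k * wav \<psi> i j k x) < C/2 * 2 powr (\<gamma> * real j)"
    using small neither by blast
  obtain i j k where ijk: "max Ja Jb \<le> j" "C * 2 powr (\<gamma> * real j) \<le> cmod ((a + b) i j k * wav \<psi> i j k x)"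
    using C(2) by blast
  have "cmod ((a + b) i j k * wav \<psi> i j k x) \<le> cmod (a i j k * wav \<psi> i j k x) + cmod (b i j k * wav \<psi> i j k x)"
    by (simp add: distrib_right norm_triangle_ineq)
  also have "\<dots> < C/2 * 2 powr (\<gamma> * real j) + C/2 * 2 powr (\<gamma> * real j)"
    using Ja[of j i k] Jb[of j i k] ijk(1) by simp
  finally show False using ijk(2) by simp
qed

lemma grows_at_rate_cscale:
  assumes "t \<noteq> 0"
  shows "grows_at_rate \<psi> (cscale t c) x \<gamma> \<longleftrightarrow> grows_at_rate \<psi> c x \<gamma>"
proof -
  have scale: "grows_at_rate \<psi> (cscale u f) x \<gamma>"
    if u: "u \<noteq> 0" and f: "grows_at_rate \<psi> f x \<gamma>" for u f
  proof -
    obtain C where C: "C > 0"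
      "\<And>J. \<exists>i j k. J \<le> j \<and> C * 2 powr (\<gamma> * real j) \<le> cmod (f i j k * wav \<psi> i j k x)"
      using f unfolding grows_at_rate_def by blast
    have step: "C * cmod u * 2 powr (\<gamma> * real j) \<le> cmod (cscale u f i j k * wav \<psi> i j k x)"
      if "C * 2 powr (\<gamma> * real j) \<le> cmod (f i j k * wav \<psi> i j k x)" for i j k
      using mult_left_mono[OF that, of "cmod u"] by (simp add: cscale_def norm_mult mult_ac)
    show ?thesis
      unfolding grows_at_rate_def
    proof (intro exI[of _ "C * cmod u"] conjI allI)
      show "C * cmod u > 0" using C(1) u by simp
      fix J
      from C(2)[of J] show "\<exists>i j k. J \<le> j \<and> C * cmod u * 2 powr (\<gamma> * real j)
          \<le> cmod (cscale u f i j k * wav \<psi> i j k x)"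
        using step by blast
    qed
  qed
  have "cscale (inverse t) (cscale t c) = c" using assms by (simp add: cscale_def fun_eq_iff)
  then show ?thesis using scale[OF assms, of c] scale[of "inverse t" "cscale t c"] assms by auto
qed

lemma grows_at_rate_uminus: "grows_at_rate \<psi> (- c) x \<gamma> \<longleftrightarrow> grows_at_rate \<psi> c x \<gamma>"
  using grows_at_rate_cscale[of "-1" \<psi> c x \<gamma>] by (simp add: cscale_def fun_Compl_def)

lemma ereal_le_div_exp_iff:
  "ereal a \<le> div_exp \<psi> c x \<longleftrightarrow> (\<forall>\<gamma> < a. grows_at_rate \<psi> c x \<gamma>)"
proof
  assume "ereal a \<le> div_exp \<psi> c x"
  show "\<forall>\<gamma> < a. grows_at_rate \<psi> c x \<gamma>"
  proof (intro allI impI)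
    fix \<gamma> assume "\<gamma> < a"
    then have "ereal \<gamma> < ereal a" by simp
    then have "ereal \<gamma> < div_exp \<psi> c x"
      using \<open>ereal a \<le> div_exp \<psi> c x\<close> by (rule less_le_trans)
    then have "ereal \<gamma> < Sup (ereal ` {\<gamma>. grows_at_rate \<psi> c x \<gamma>})"
      by (simp add: div_exp_eq_Sup_rates)
    then obtain \<gamma>' where "grows_at_rate \<psi> c x \<gamma>'" "\<gamma> < \<gamma>'" by (auto simp: less_Sup_iff)
    then show "grows_at_rate \<psi> c x \<gamma>" using grows_at_rate_mono by fastforce
  qed
next
  assume rates: "\<forall>\<gamma> < a. grows_at_rate \<psi> c x \<gamma>"
  show "ereal a \<le> div_exp \<psi> c x"
  proof (rule dense_le)
    fix y assume "y < ereal a"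
    then show "y \<le> div_exp \<psi> c x"
      using rates by (cases y) (auto simp: div_exp_eq_Sup_rates intro: Sup_upper)
  qed
qed

lemma grows_at_rate_iff_nat:
  "grows_at_rate \<psi> c x \<gamma> \<longleftrightarrow>
     (\<exists>l::nat. \<forall>J. \<exists>i j k. J \<le> j \<and> 2 powr (\<gamma> * real j) / (real l + 1) < cmod (c i j k * wav \<psi> i j k x))"
proof
  assume "grows_at_rate \<psi> c x \<gamma>"
  then obtain C where C: "C > 0"
    "\<And>J. \<exists>i j k. J \<le> j \<and> C * 2 powr (\<gamma> * real j) \<le> cmod (c i j k * wav \<psi> i j k x)"
    unfolding grows_at_rate_def by blast
  obtain l :: nat where "1 / (real l + 1) < C"
    using C(1) by (metis nat_approx_posE of_nat_Suc add.commute)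
  then have less: "2 powr (\<gamma> * real j) / (real l + 1) < C * 2 powr (\<gamma> * real j)" for j
    by (simp add: divide_inverse mult.commute mult_strict_left_mono)
  have "\<exists>i j k. J \<le> j \<and> 2 powr (\<gamma> * real j) / (real l + 1) < cmod (c i j k * wav \<psi> i j k x)" for J
  proof -
    obtain i j k where "J \<le> j" "C * 2 powr (\<gamma> * real j) \<le> cmod (c i j k * wav \<psi> i j k x)"
      using C(2) by blast
    then show ?thesis using less[of j] by (intro exI conjI) (auto intro: less_le_trans)
  qed
  then show "\<exists>l::nat. \<forall>J. \<exists>i j k. J \<le> j \<and> 2 powr (\<gamma> * real j) / (real l + 1) < cmod (c i j k * wav \<psi> i j k x)"
    by blast
next
  assume "\<exists>l::nat. \<forall>J. \<exists>i j k. J \<le> j \<and> 2 powr (\<gamma> * real j) / (real l + 1) < cmod (c i j k * wav \<psi> i j k x)"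
  then obtain l :: nat where
    "\<forall>J. \<exists>i j k. J \<le> j \<and> 2 powr (\<gamma> * real j) / (real l + 1) < cmod (c i j k * wav \<psi> i j k x)"
    by blast
  then have "\<forall>J. \<exists>i j k. J \<le> j \<and> 1 / (real l + 1) * 2 powr (\<gamma> * real j) \<le> cmod (c i j k * wav \<psi> i j k x)"
    by (fastforce dest: less_imp_le)
  then show "grows_at_rate \<psi> c x \<gamma>"
    unfolding grows_at_rate_def by (intro exI[of _ "1 / (real l + 1)"]) auto
qed

lemma wav_bounded:
  fixes \<psi> :: "'i::finite \<Rightarrow> real ^ 'd \<Rightarrow> complex"
  assumes "\<And>i. bounded_fast_decay (\<psi> i)"
  obtains B where "\<And>i j k x. cmod (wav \<psi> i j k x) \<le> B"
proof -
  have "\<forall>i. \<exists>b. \<forall>y. cmod (\<psi> i y) \<le> b"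
    using assms unfolding bounded_fast_decay_def by blast
  then obtain Bf where Bf: "\<And>i y. cmod (\<psi> i y) \<le> Bf i"
    by (auto simp: choice_iff)
  have "Bf i \<le> (\<Sum>i\<in>UNIV. \<bar>Bf i\<bar>)" for i
    using member_le_sum[of i UNIV "\<lambda>i. \<bar>Bf i\<bar>"] by auto
  then have "cmod (wav \<psi> i j k x) \<le> (\<Sum>i\<in>UNIV. \<bar>Bf i\<bar>)" for i j k x
    unfolding wav_def using Bf order_trans by blast
  then show ?thesis by (rule that)
qed

text \<open>Rescaling by $2^J$ moves $x$ into a unit cube, where one of the finitely many covering
  wavelets, of scale $j_l$, is large; it is the wavelet of scale $J + j_l$ at the corresponding
  position.\<close>

lemma dyadic_covering_large_wav:
  assumes "dyadic_covering \<psi>"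
  obtains C0 where "C0 > 0" "\<And>x J. \<exists>i j k. J \<le> j \<and> C0 \<le> cmod (wav \<psi> i j k x)"
proof -
  obtain C0 L where C0: "C0 > 0"
    and L: "\<forall>y \<in> unit_cube. \<exists>(i, j, k) \<in> L. cmod (wav \<psi> i j k y) \<ge> C0"
    using assms unfolding dyadic_covering_def by blast
  have "\<exists>i j k. J \<le> j \<and> C0 \<le> cmod (wav \<psi> i j k x)" for x J
  proof -
    define m :: "int ^ _" where "m = (\<chi> l. \<lfloor>(2 ^ J *\<^sub>R x) $ l\<rfloor>)"
    define y where "y = 2 ^ J *\<^sub>R x - ivec m"
    have "y \<in> unit_cube"
      unfolding unit_cube_def y_def m_def ivec_def by (auto simp: frac_def[symmetric] frac_lt_1)
    then obtain i jl kl where "cmod (wav \<psi> i jl kl y) \<ge> C0"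
      using L by blast
    moreover have "wav \<psi> i (J + jl) (\<chi> l. 2 ^ jl * m $ l + kl $ l) x = wav \<psi> i jl kl y"
      unfolding wav_def
      by (rule arg_cong[where f = "\<psi> i"]) (simp add: vec_eq_iff ivec_def y_def algebra_simps power_add)
    ultimately show ?thesis
      by (intro exI[of _ i] exI[of _ "J + jl"] exI[of _ "\<chi> l. 2 ^ jl * m $ l + kl $ l"]) simp
  qed
  then show ?thesis using C0 that by blast
qed

lemma norm_add_or_diff_ge:
  fixes z v :: "'a::real_normed_vector"
  shows "norm v \<le> norm (z + v) \<or> norm v \<le> norm (z - v)"
proof -
  have "(z + v) - (z - v) = 2 *\<^sub>R v" by (simp add: scaleR_2)
  then have "2 * norm v \<le> norm (z + v) + norm (z - v)"
    using norm_triangle_ineq4[of "z + v" "z - v"] by simp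
  then show ?thesis by linarith
qed

locale critical_point = bseq s p q
  for s :: real and p q :: ereal +
  fixes \<psi> :: "'i::finite \<Rightarrow> real ^ 'd::finite \<Rightarrow> complex" and x0 :: "real ^ 'd" and B C0 :: real
  assumes wav_le: "\<And>i j k. cmod (wav \<psi> i j k x0) \<le> B"
    and C0_pos: "C0 > 0"
    and wav_ge: "\<And>J. \<exists>i j k. J \<le> j \<and> C0 \<le> cmod (wav \<psi> i j k x0)"
begin

abbreviation E :: "('i, 'd) coeffs set" where "E \<equiv> bspace s p q"

definition crit :: real where "crit = - s + dp TYPE('d) p"

definition generic :: "('i, 'd) coeffs set" where
  "generic = {c \<in> E. div_exp \<psi> c x0 = ereal crit}"

lemma bweight_eq: "bweight TYPE('d) s p j = 2 powr (- crit * real j)"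
  by (simp add: bweight_def crit_def)

lemma rate_le_crit:
  assumes "c \<in> E" "grows_at_rate \<psi> c x0 \<gamma>"
  shows "\<gamma> \<le> crit"
proof (rule ccontr)
  assume "\<not> \<gamma> \<le> crit"
  define M where "M = enn2real (bnorm s p q c)"
  obtain C where C: "C > 0"
    "\<And>J. \<exists>i j k. J \<le> j \<and> C * 2 powr (\<gamma> * real j) \<le> cmod (c i j k * wav \<psi> i j k x0)"
    using assms(2) unfolding grows_at_rate_def by blast
  have "filterlim (\<lambda>j::nat. 2 powr ((\<gamma> - crit) * real j)) at_top at_top"
    using \<open>\<not> \<gamma> \<le> crit\<close> by real_asymp
  then obtain J where J: "\<And>j. j \<ge> J \<Longrightarrow> 2 powr ((\<gamma> - crit) * real j) > M * B / C"
    by (auto simp: filterlim_at_top_dense eventually_at_top_linorder)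
  obtain i j k where ijk: "J \<le> j" "C * 2 powr (\<gamma> * real j) \<le> cmod (c i j k * wav \<psi> i j k x0)"
    using C(2) by blast
  have "cmod (c i j k) * 2 powr (- crit * real j) \<le> M"
    using coeff_le_enn2real_bnorm[OF assms(1), of i j k] by (simp add: M_def bweight_eq)
  then have "cmod (c i j k) \<le> M * 2 powr (crit * real j)"
    by (simp add: powr_minus field_simps)
  then have "cmod (c i j k * wav \<psi> i j k x0) \<le> M * 2 powr (crit * real j) * B"
    using wav_le[of i j k] by (simp add: norm_mult M_def mult_mono)
  with ijk(2) have "C * (2 powr ((\<gamma> - crit) * real j) * 2 powr (crit * real j)) \<le> M * B * 2 powr (crit * real j)"
    by (simp add: powr_add[symmetric] algebra_simps)
  then have "2 powr ((\<gamma> - crit) * real j) \<le> M * B / C"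
    using C(1) by (simp add: field_simps)
  then show False using J[OF ijk(1)] by simp
qed

lemma generic_iff: "c \<in> generic \<longleftrightarrow> c \<in> E \<and> (\<forall>\<gamma> < crit. grows_at_rate \<psi> c x0 \<gamma>)"
proof -
  have "div_exp \<psi> c x0 \<le> ereal crit" if "c \<in> E"
    unfolding div_exp_eq_Sup_rates using rate_le_crit[OF that] by (auto intro!: Sup_least)
  then show ?thesis by (auto simp: generic_def ereal_le_div_exp_iff[symmetric] intro: antisym)
qed

lemma diff_nongeneric:
  assumes "a \<in> E - generic" "b \<in> E - generic"
  shows "a - b \<notin> generic"
proof
  assume "a - b \<in> generic"
  obtain \<gamma>a \<gamma>b where "\<gamma>a < crit" "\<not> grows_at_rate \<psi> a x0 \<gamma>a" "\<gamma>b < crit" "\<not> grows_at_rate \<psi> b x0 \<gamma>b"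
    using assms by (auto simp: generic_iff)
  moreover have "grows_at_rate \<psi> (a + - b) x0 (max \<gamma>a \<gamma>b)"
    using \<open>a - b \<in> generic\<close> calculation by (simp add: generic_iff)
  ultimately show False
    using grows_at_rate_add grows_at_rate_uminus grows_at_rate_mono by (metis max.cobounded1 max.cobounded2)
qed

subsection \<open>Residuality\<close>

definition threshold :: "nat \<Rightarrow> nat \<Rightarrow> real" where
  "threshold n j = 2 powr ((crit - 1 / (real n + 1)) * real j)"

definition spike_set :: "nat \<Rightarrow> ('i, 'd) coeffs set" where
  "spike_set n = {c \<in> E. \<exists>i j k. n \<le> j \<and> threshold n j < cmod (c i j k * wav \<psi> i j k x0)}"

lemma openin_spike_set: "openin (btop s p q) (spike_set n)"
proof -
  have "spike_set n = (\<Union>(i, j, k) \<in> {t. n \<le> fst (snd t)}.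
      {c \<in> E. c i j k \<in> {z. threshold n j < cmod (z * wav \<psi> i j k x0)}})"
    unfolding spike_set_def by auto blast+
  moreover have "openin (btop s p q) {c \<in> E. c i j k \<in> {z. threshold n j < cmod (z * wav \<psi> i j k x0)}}"
    for i j k
    by (intro openin_btop_coeff open_Collect_less continuous_intros)
  ultimately show ?thesis by auto
qed

lemma Inter_spike_set_subset: "(\<Inter>n. spike_set n) \<subseteq> generic"
proof
  fix c assume c: "c \<in> (\<Inter>n. spike_set n)"
  have "grows_at_rate \<psi> c x0 \<gamma>" if "\<gamma> < crit" for \<gamma>
  proof -
    obtain n0 :: nat where n0: "1 / (real n0 + 1) < crit - \<gamma>"
      using \<open>\<gamma> < crit\<close> by (metis diff_gt_0_iff_gt nat_approx_posE of_nat_Suc add.commute)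
    have "\<exists>i j k. J \<le> j \<and> 1 * 2 powr (\<gamma> * real j) \<le> cmod (c i j k * wav \<psi> i j k x0)" for J
    proof -
      define n where "n = max J n0"
      have "c \<in> spike_set n" using c by blast
      then obtain i j k where ijk: "n \<le> j" "threshold n j < cmod (c i j k * wav \<psi> i j k x0)"
        unfolding spike_set_def by blast
      have "1 / (real n + 1) \<le> 1 / (real n0 + 1)" by (simp add: n_def frac_le)
      then have "2 powr (\<gamma> * real j) \<le> threshold n j"
        unfolding threshold_def using n0 by (intro powr_mono mult_right_mono) auto
      then show ?thesis using ijk by (intro exI[of _ i] exI[of _ j] exI[of _ k]) (auto simp: n_def)
    qed
    then show ?thesis unfolding grows_at_rate_def by (intro exI[of _ 1]) auto
  qed
  moreover have "c \<in> E" using c by (auto simp: spike_set_def)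
  ultimately show "c \<in> generic" by (simp add: generic_iff)
qed

definition spike_size :: "nat \<Rightarrow> nat \<Rightarrow> real" where
  "spike_size n j = 2 * threshold n j / C0"

lemma spike_size_pos: "spike_size n j > 0"
  using C0_pos by (simp add: spike_size_def threshold_def)

lemma spike_cost_tendsto: "(\<lambda>j. spike_size n j * bweight TYPE('d) s p j) \<longlonglongrightarrow> 0"
proof -
  have "(\<lambda>j::nat. 2 / C0 * 2 powr (- (1 / (real n + 1)) * real j)) \<longlonglongrightarrow> 0"
    by real_asymp
  moreover have "(\<lambda>j. spike_size n j * bweight TYPE('d) s p j)
      = (\<lambda>j::nat. 2 / C0 * 2 powr (- (1 / (real n + 1)) * real j))"
    by (auto simp: fun_eq_iff spike_size_def threshold_def bweight_eq powr_add[symmetric] algebra_simps)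
  ultimately show ?thesis by simp
qed

text \<open>Adding a single coefficient of size $2\,\mathrm{threshold}(n,j)/C_0$ at a scale $j$ where the
  wavelet at $x_0$ is at least $C_0$ lands in the spike set, and costs $O(2^{-j/(n+1)})$ in norm.\<close>

lemma spike_set_near:
  assumes x: "x \<in> E" and \<delta>: "\<delta> > 0"
  obtains y where "y \<in> spike_set n" "bdist s p q x y < \<delta>"
proof -
  obtain J where J: "\<And>j. J \<le> j \<Longrightarrow> spike_size n j * bweight TYPE('d) s p j < \<delta> powr (1 / r)"
    using order_tendstoD(2)[OF spike_cost_tendsto, of "\<delta> powr (1 / r)" n] \<delta>
    by (auto simp: eventually_sequentially)
  obtain i j k where ijk: "max J n \<le> j" "C0 \<le> cmod (wav \<psi> i j k x0)"
    using wav_ge by blast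
  define m where "m = spike_size n j"
  have m: "m > 0" by (simp add: m_def spike_size_pos)
  obtain v where v: "cmod v = m" "m \<le> cmod (x i j k + v)"
    using norm_add_or_diff_ge[of "complex_of_real m" "x i j k"] m
    by (metis abs_of_pos diff_conv_add_uminus norm_minus_cancel norm_of_real)
  define y where "y = x + single_coeff i j k v"
  have y: "y \<in> E" unfolding y_def
    using x by (intro bspace_add p_pos q_pos single_coeff_in_bspace)
  have "bdist s p q x y = (m * bweight TYPE('d) s p j) powr r"
    using bnorm_uminus[OF p_pos q_pos, of s "single_coeff i j k v"] m
    by (simp add: bdist_def y_def bnorm_single_coeff p_pos q_pos v(1))
  also have "\<dots> < \<delta>"
    using J[of j] ijk(1) m r_bounds(1) \<delta> powr_less_powr_iff[of r "m * bweight TYPE('d) s p j" "\<delta> powr (1 / r)"]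
    by (simp add: m_def powr_powr)
  finally have "bdist s p q x y < \<delta>" .
  moreover have "y \<in> spike_set n"
  proof -
    have "m * C0 \<le> cmod (y i j k * wav \<psi> i j k x0)"
      using v(2) ijk(2) m C0_pos by (simp add: y_def single_coeff_def norm_mult mult_mono)
    moreover have "m * C0 = 2 * threshold n j" using C0_pos by (simp add: m_def spike_size_def)
    moreover have "threshold n j > 0" by (simp add: threshold_def)
    ultimately have "threshold n j < cmod (y i j k * wav \<psi> i j k x0)" by linarith
    then show ?thesis using y ijk(1) unfolding spike_set_def by auto
  qed
  ultimately show ?thesis using that by blast
qed

lemma dense_spike_set: "btop s p q closure_of spike_set n = E"
proof -
  interpret M: Metric_space E "bdist s p q" by (rule Metric_space_bdist)
  have "\<exists>y \<in> spike_set n. y \<in> U" if x: "x \<in> U" and U: "openin (btop s p q) U" for x U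
  proof -
    have "openin M.mtopology U" using U by (simp add: btop_eq_mtopology)
    then obtain \<delta> where \<delta>: "\<delta> > 0" "M.mball x \<delta> \<subseteq> U" "x \<in> E"
      using x M.openin_mtopology by blast
    obtain y where "y \<in> spike_set n" "bdist s p q x y < \<delta>"
      by (rule spike_set_near[OF \<delta>(3,1)])
    moreover have "y \<in> E" using \<open>y \<in> spike_set n\<close> by (simp add: spike_set_def)
    ultimately show ?thesis using \<delta> by auto
  qed
  then show ?thesis
    using closure_of_subset_topspace[of "btop s p q" "spike_set n"]
    by (auto simp: in_closure_of) blast
qed

lemma residual_generic: "residual (btop s p q) generic"
  unfolding residual_def using openin_spike_set dense_spike_set Inter_spike_set_subset by auto

subsection \<open>Maximal lineability\<close>

definition peak :: "nat \<Rightarrow> 'i \<times> nat \<times> (int ^ 'd)" where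
  "peak J = (SOME (i, j, k). J \<le> j \<and> C0 \<le> cmod (wav \<psi> i j k x0))"

lemma peak:
  assumes "peak J = (i, j, k)"
  shows "J \<le> j" "C0 \<le> cmod (wav \<psi> i j k x0)"
proof -
  have "\<exists>t. (\<lambda>(i, j, k). J \<le> j \<and> C0 \<le> cmod (wav \<psi> i j k x0)) t"
    using wav_ge[of J] by auto
  from someI_ex[OF this] show "J \<le> j" "C0 \<le> cmod (wav \<psi> i j k x0)"
    using assms unfolding peak_def by auto
qed

primrec peak_seq :: "nat \<Rightarrow> 'i \<times> nat \<times> (int ^ 'd)" where
  "peak_seq 0 = peak 0"
| "peak_seq (Suc m) = peak (fst (snd (peak_seq m)) + 1)"

definition level :: "nat \<Rightarrow> nat" where "level m = fst (snd (peak_seq m))"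

lemma peak_seq_large:
  assumes "peak_seq m = (i, j, k)"
  shows "C0 \<le> cmod (wav \<psi> i j k x0)"
  using assms peak(2) by (cases m) auto

lemma strict_mono_level: "strict_mono level"
proof (rule strict_mono_Suc_iff[THEN iffD2], intro allI)
  fix m
  obtain i j k where "peak (level m + 1) = (i, j, k)" by (cases "peak (level m + 1)") auto
  then show "level m < level (Suc m)" using peak(1) by (fastforce simp: level_def)
qed

lemma inj_peak_seq: "inj peak_seq"
proof (rule injI)
  fix a b assume "peak_seq a = peak_seq b"
  then have "level a = level b" by (simp add: level_def)
  then show "a = b" using strict_mono_eq[OF strict_mono_level] by simp
qed

definition coeff_at :: "('i, 'd) coeffs \<Rightarrow> 'i \<times> nat \<times> (int ^ 'd) \<Rightarrow> complex" where
  "coeff_at c t = c (fst t) (fst (snd t)) (snd (snd t))"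

definition spread_source :: "nat \<Rightarrow> 'i \<times> nat \<times> (int ^ 'd)" where
  "spread_source m = from_nat (fst (prod_decode m))"

lemma spread_source_prod_encode: "spread_source (prod_encode (to_nat t, l)) = t"
  by (simp add: spread_source_def)

definition qexp :: real where "qexp = (if q = \<infinity> then 1 else real_of_ereal q)"

definition damping :: "nat \<Rightarrow> real" where "damping j = (real j + 1) powr - (2 / qexp)"

definition spread_factor :: "nat \<Rightarrow> real" where
  "spread_factor m = bweight TYPE('d) s p (fst (snd (spread_source m))) * damping (level m)
    / bweight TYPE('d) s p (level m)"

text \<open>The coefficient at a source position is copied, rescaled, to the peaks of infinitely many
  scales; the damping makes the copies summable in $b^{s,q}_p$ while keeping growth rate
  arbitrarily close to the critical one.\<close>

definition spread :: "('i, 'd) coeffs \<Rightarrow> ('i, 'd) coeffs" where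
  "spread c = (\<lambda>i j k. if (i, j, k) \<in> range peak_seq
     then coeff_at c (spread_source (inv peak_seq (i, j, k))) * of_real (spread_factor (inv peak_seq (i, j, k)))
     else 0)"

lemma qexp_pos: "qexp > 0"
  using q_pos unfolding qexp_def by (cases rule: ereal_pos_cases) auto

lemma damping_pos: "damping j > 0" by (simp add: damping_def)

lemma spread_factor_pos: "spread_factor m > 0" by (simp add: spread_factor_def damping_pos)

lemma spread_at_peak:
  assumes "peak_seq m = (i, j, k)"
  shows "spread c i j k = coeff_at c (spread_source m) * of_real (spread_factor m)"
proof -
  have "(i, j, k) \<in> range peak_seq" "inv peak_seq (i, j, k) = m"
    using assms inj_peak_seq by (metis rangeI, metis inv_f_f)
  then show ?thesis by (simp add: spread_def)
qed

lemma spread_hom: "module_hom cscale cscale spread"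
  by (auto simp: module_hom_iff module_cscale spread_def fun_eq_iff cscale_def coeff_at_def
      distrib_right)

lemma inj_spread: "inj spread"
proof (rule injI)
  fix a b assume eq: "spread a = spread b"
  have "coeff_at a t = coeff_at b t" for t
  proof -
    define m where "m = prod_encode (to_nat t, 0)"
    obtain i j k where ijk: "peak_seq m = (i, j, k)" by (cases "peak_seq m") auto
    have "coeff_at a t * of_real (spread_factor m) = coeff_at b t * of_real (spread_factor m)"
      using spread_at_peak[OF ijk, of a] spread_at_peak[OF ijk, of b] eq
      by (auto simp: m_def spread_source_prod_encode)
    then show ?thesis using spread_factor_pos[of m] by simp
  qed
  then show "a = b" by (force simp: coeff_at_def fun_eq_iff)
qed

lemma lp_norm_damping_finite: "lp_norm q (\<lambda>j. ennreal (damping j)) < top"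
  using q_pos
proof (cases rule: ereal_pos_cases)
  case 1
  have "damping j \<le> 1" for j
  proof -
    have "1 \<le> (real j + 1) powr (2 / qexp)" using qexp_pos by (intro ge_one_powr_ge_zero) auto
    then show ?thesis by (simp add: damping_def powr_minus field_simps)
  qed
  then have "(SUP j. ennreal (damping j)) \<le> 1"
    by (intro SUP_least) simp
  then show ?thesis using 1 by (simp add: lp_norm_def le_less_trans)
next
  case (2 Q)
  have "qexp = Q" unfolding qexp_def using 2 by simp
  then have "damping j powr Q = (real j + 1) powr (- 2)" for j
    using 2(1) by (simp add: damping_def powr_powr)
  then have "damping j powr Q = inverse (real (Suc j) ^ 2)" for j
    by (simp add: powr_minus add.commute)
  then have "(\<lambda>j. epow (ennreal (damping j)) Q) = (\<lambda>j. ennreal (inverse (real (Suc j) ^ 2)))"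
    using damping_pos by (auto simp: fun_eq_iff epow_ennreal less_imp_le)
  moreover have "summable (\<lambda>j. inverse (real (Suc j) ^ 2))"
    using inverse_power_summable[of 2, where 'a=real] summable_Suc_iff[of "\<lambda>n. inverse (real n ^ 2)"]
    by simp
  ultimately have "(\<integral>\<^sup>+j. epow (ennreal (damping j)) Q \<partial>count_space UNIV) < top"
    by (simp add: nn_integral_count_space_nat suminf_ennreal2)
  then show ?thesis using 2 by (simp add: lp_norm_def)
qed

lemma weighted_spread_at_peak:
  assumes "peak_seq m = (i, j, k)" "spread_source m = (i', j', k')"
  shows "cmod (spread c i j k) * bweight TYPE('d) s p j = cmod (c i' j' k') * bweight TYPE('d) s p j' * damping j"
proof -
  have "level m = j" using assms(1) by (simp add: level_def)
  then have "spread_factor m * bweight TYPE('d) s p j = bweight TYPE('d) s p j' * damping j"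
    using assms(2) by (simp add: spread_factor_def)
  moreover have "cmod (spread c i j k) = cmod (c i' j' k') * spread_factor m"
    using spread_at_peak[OF assms(1), of c] spread_factor_pos[of m] by (simp add: assms(2) coeff_at_def norm_mult)
  ultimately show ?thesis by (simp add: mult.assoc)
qed

text \<open>Each scale carries at most one nonzero coefficient of \<open>spread c\<close>.\<close>

lemma level_norm_spread_le:
  assumes "c \<in> E"
  shows "level_norm s p (spread c) j \<le> ennreal (enn2real (bnorm s p q c) * damping j)"
proof -
  define M where "M = enn2real (bnorm s p q c)"
  define pos where "pos = (fst (peak_seq (inv level j)), snd (snd (peak_seq (inv level j))))"
  have entry: "ennreal (cmod (spread c i j k) * bweight TYPE('d) s p j)
      \<le> (if (i, k) = pos then ennreal (M * damping j) else 0)" for i k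
  proof (cases "(i, j, k) \<in> range peak_seq")
    case True
    then obtain m where m: "peak_seq m = (i, j, k)" by auto
    then have "level m = j" by (simp add: level_def)
    then have "inv level j = m"
      using inv_f_f[OF strict_mono_imp_inj_on[OF strict_mono_level, of UNIV]] by blast
    then have "pos = (i, k)" using m by (simp add: pos_def)
    obtain i' j' k' where src: "spread_source m = (i', j', k')" by (cases "spread_source m") auto
    have "cmod (c i' j' k') * bweight TYPE('d) s p j' * damping j \<le> M * damping j"
      using coeff_le_enn2real_bnorm[OF assms, of i' j' k'] damping_pos[of j]
      by (simp add: M_def mult_right_mono)
    then show ?thesis
      using \<open>pos = (i, k)\<close> weighted_spread_at_peak[OF m src] by (simp add: ennreal_leI)
  next
    case False
    then show ?thesis by (simp add: spread_def)
  qed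
  have "level_norm s p (spread c) j \<le> lp_norm p (\<lambda>ik. if ik = pos then ennreal (M * damping j) else 0)"
    unfolding level_norm_eq_lp_norm[OF p_pos]
  proof (intro lp_norm_mono p_pos)
    fix ik :: "'i \<times> (int ^ 'd)"
    show "ennreal (cmod (spread c (fst ik) j (snd ik)) * bweight TYPE('d) s p j)
        \<le> (if ik = pos then ennreal (M * damping j) else 0)"
      using entry[of "fst ik" "snd ik"] by simp
  qed
  then show ?thesis by (simp add: lp_norm_single p_pos M_def)
qed

lemma spread_in_bspace:
  assumes "c \<in> E"
  shows "spread c \<in> E"
proof -
  define M where "M = enn2real (bnorm s p q c)"
  have "bnorm s p q (spread c) \<le> lp_norm q (\<lambda>j. ennreal M * ennreal (damping j))"
    unfolding bnorm_eq_lp_norm using level_norm_spread_le[OF assms] damping_pos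
    by (intro lp_norm_mono q_pos) (simp add: M_def ennreal_mult less_imp_le)
  also have "\<dots> = ennreal M * lp_norm q (\<lambda>j. ennreal (damping j))"
    using q_pos by (simp add: lp_norm_cmult M_def)
  also have "\<dots> < top" using lp_norm_damping_finite by (simp add: ennreal_mult_less_top)
  finally show ?thesis by (simp add: bspace_def)
qed

lemma damping_eventually_ge:
  assumes "e > 0"
  obtains L0 where "\<And>l. L0 \<le> l \<Longrightarrow> 2 powr (- e * real l) \<le> damping l"
proof -
  define a where "a = 2 / qexp"
  have "a > 0" using qexp_pos by (simp add: a_def)
  then have "filterlim (\<lambda>l::nat. (real l + 1) powr - a / 2 powr (- e * real l)) at_top at_top"
    using assms by real_asymp
  then have "\<forall>\<^sub>F l in sequentially. 1 \<le> (real l + 1) powr - a / 2 powr (- e * real l)"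
    unfolding filterlim_at_top by (rule spec)
  then obtain L0 where "\<And>l. L0 \<le> l \<Longrightarrow> 1 \<le> (real l + 1) powr - a / 2 powr (- e * real l)"
    by (auto simp: eventually_sequentially)
  then have "\<And>l. L0 \<le> l \<Longrightarrow> 2 powr (- e * real l) \<le> damping l"
    by (simp add: damping_def a_def le_divide_eq)
  then show ?thesis by (rule that)
qed

lemma spread_grows:
  assumes "c \<noteq> 0" "\<gamma> < crit"
  shows "grows_at_rate \<psi> (spread c) x0 \<gamma>"
proof -
  obtain t0 where t0: "coeff_at c t0 \<noteq> 0"
    using assms(1) by (auto simp: coeff_at_def fun_eq_iff)
  define j0 where "j0 = fst (snd t0)"
  define e where "e = crit - \<gamma>"
  obtain L0 where L0: "\<And>l. L0 \<le> l \<Longrightarrow> 2 powr (- e * real l) \<le> damping l"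
    using damping_eventually_ge[of e] assms(2) by (auto simp: e_def)
  define C where "C = cmod (coeff_at c t0) * bweight TYPE('d) s p j0 * C0"
  have "\<exists>i j k. J \<le> j \<and> C * 2 powr (\<gamma> * real j) \<le> cmod (spread c i j k * wav \<psi> i j k x0)" for J
  proof -
    define m where "m = prod_encode (to_nat t0, max J L0)"
    obtain i l k where peak_m: "peak_seq m = (i, l, k)" by (cases "peak_seq m") auto
    have l: "l = level m" using peak_m by (simp add: level_def)
    have "max J L0 \<le> m" using le_prod_encode_2[of "max J L0"] by (simp add: m_def)
    also have "m \<le> l" using strict_mono_imp_increasing[OF strict_mono_level, of m] by (simp add: l)
    finally have "max J L0 \<le> l" .
    have "spread_factor m = bweight TYPE('d) s p j0 * damping l * 2 powr (crit * real l)"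
      by (simp add: spread_factor_def spread_source_prod_encode m_def j0_def l bweight_eq powr_minus divide_inverse)
    also have "\<dots> \<ge> bweight TYPE('d) s p j0 * 2 powr (- e * real l) * 2 powr (crit * real l)"
      using L0[of l] \<open>max J L0 \<le> l\<close> by (intro mult_right_mono mult_left_mono) auto
    finally have "bweight TYPE('d) s p j0 * 2 powr (\<gamma> * real l) \<le> spread_factor m"
      by (simp add: e_def powr_add[symmetric] algebra_simps)
    then have bound: "C0 * (bweight TYPE('d) s p j0 * 2 powr (\<gamma> * real l))
        \<le> cmod (wav \<psi> i l k x0) * spread_factor m"
      using peak_seq_large[OF peak_m] C0_pos by (intro mult_mono) auto
    have "C * 2 powr (\<gamma> * real l)
        = cmod (coeff_at c t0) * (C0 * (bweight TYPE('d) s p j0 * 2 powr (\<gamma> * real l)))"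
      by (simp add: C_def mult_ac)
    also have "\<dots> \<le> cmod (coeff_at c t0) * (cmod (wav \<psi> i l k x0) * spread_factor m)"
      by (rule mult_left_mono[OF bound]) simp
    also have "\<dots> = cmod (spread c i l k * wav \<psi> i l k x0)"
      using spread_at_peak[OF peak_m, of c] spread_factor_pos[of m]
      by (simp add: m_def spread_source_prod_encode norm_mult mult_ac)
    finally show ?thesis using \<open>max J L0 \<le> l\<close> by auto
  qed
  moreover have "C > 0" using t0 C0_pos by (simp add: C_def)
  ultimately show ?thesis unfolding grows_at_rate_def by blast
qed

lemma spread_generic: "c \<in> E \<Longrightarrow> c \<noteq> 0 \<Longrightarrow> spread c \<in> generic"
  using spread_in_bspace spread_grows by (simp add: generic_iff)

lemma maximal_lineable_generic: "maximal_lineable E generic"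
proof -
  note subspace_E = subspace_bspace[OF p_pos q_pos, of s]
  obtain H where H: "H \<subseteq> E" "\<not> module.dependent cscale H" "E \<subseteq> module.span cscale H"
    using vector_space.maximal_independent_subset[OF vector_space_cscale, of E] by blast
  have "module.span cscale H \<subseteq> E"
    by (rule module.span_minimal[OF module_cscale H(1) subspace_E])
  then have span_H: "module.span cscale H = E" using H(3) by (rule antisym)
  have inj: "inj_on spread X" for X by (rule inj_on_subset[OF inj_spread]) simp
  have "spread ` E \<subseteq> generic \<union> {0}"
    using spread_generic module_hom.zero[OF spread_hom] by (cases "0 \<in> E") auto
  moreover have "module.subspace cscale (spread ` E)"
    by (rule module_hom.subspace_image[OF spread_hom subspace_E])
  moreover have "hamel_basis (spread ` E) (spread ` H)"
    unfolding hamel_basis_def module_hom.span_image[OF spread_hom] span_H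
    using H(1) module_hom.independent_injective_image[OF spread_hom H(2) inj] by auto
  moreover have "hamel_basis E H" unfolding hamel_basis_def using H(1,2) span_H by simp
  moreover have "H \<approx> spread ` H"
    using inj_on_imp_bij_betw[OF inj] by (auto simp: eqpoll_def)
  then have "spread ` H \<approx> H" by (rule eqpoll_sym)
  ultimately show ?thesis unfolding maximal_lineable_def by blast
qed

subsection \<open>Prevalence\<close>

lemma generic_cscale: "g \<in> generic \<Longrightarrow> t \<noteq> 0 \<Longrightarrow> cscale t g \<in> generic"
  by (simp add: generic_iff grows_at_rate_cscale bspace_cscale p_pos q_pos)

lemma generic_iff_nat:
  "c \<in> generic \<longleftrightarrow> c \<in> E \<and> (\<forall>n::nat. \<exists>l::nat. \<forall>J. \<exists>i j k. J \<le> j \<and>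
     2 powr ((crit - 1 / (real n + 1)) * real j) / (real l + 1) < cmod (c i j k * wav \<psi> i j k x0))"
proof -
  have "(\<forall>\<gamma> < crit. grows_at_rate \<psi> c x0 \<gamma>) \<longleftrightarrow> (\<forall>n::nat. grows_at_rate \<psi> c x0 (crit - 1 / (real n + 1)))"
  proof
    assume rates: "\<forall>n::nat. grows_at_rate \<psi> c x0 (crit - 1 / (real n + 1))"
    show "\<forall>\<gamma> < crit. grows_at_rate \<psi> c x0 \<gamma>"
    proof (intro allI impI)
      fix \<gamma> assume "\<gamma> < crit"
      then obtain n :: nat where "1 / (real n + 1) < crit - \<gamma>"
        by (metis diff_gt_0_iff_gt nat_approx_posE of_nat_Suc add.commute)
      then show "grows_at_rate \<psi> c x0 \<gamma>"
        using rates grows_at_rate_mono[of \<psi> c x0 "crit - 1 / (real n + 1)" \<gamma>] by simp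
    qed
  qed simp
  then show ?thesis by (simp add: generic_iff grows_at_rate_iff_nat)
qed

lemma generic_borel: "generic \<in> borel_sets (btop s p q)"
proof -
  interpret sigma_algebra E "borel_sets (btop s p q)" by (rule sigma_algebra_borel_btop)
  have basic: "{c \<in> E. c i j k \<in> {z. a / (real l + 1) < cmod (z * wav \<psi> i j k x0)}} \<in> borel_sets (btop s p q)"
    for i j k a l
    unfolding borel_sets_def
    by (intro sigma_sets.Basic CollectI openin_btop_coeff open_Collect_less continuous_intros)
  have eq: "generic = (\<Inter>n. \<Union>l. \<Inter>J. \<Union>i. \<Union>j \<in> {J..}. \<Union>k.
     {c \<in> E. c i j k \<in> {z. 2 powr ((crit - 1 / (real n + 1)) * real j) / (real l + 1)
                          < cmod (z * wav \<psi> i j k x0)}})"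
    by (auto simp: generic_iff_nat Bex_def)
  show ?thesis unfolding eq by (intro countable_INT countable_UN image_subsetI basic) auto
qed

lemma prevalent_generic: "prevalent (btop s p q) generic"
proof -
  define g where "g = spread (single_coeff undefined 0 0 1)"
  have g: "g \<in> generic"
    unfolding g_def
    by (intro spread_generic single_coeff_in_bspace p_pos q_pos) (auto simp: single_coeff_def fun_eq_iff)
  interpret sigma_algebra E "borel_sets (btop s p q)" by (rule sigma_algebra_borel_btop)
  have "E - generic \<in> borel_sets (btop s p q)" using generic_borel by (rule compl_sets)
  moreover have "countable {t. cscale (of_real t) g \<in> (\<lambda>a. x + a) ` (E - generic)}" for x
  proof -
    define S where "S = {t. cscale (of_real t) g \<in> (\<lambda>a. x + a) ` (E - generic)}"
    have "t1 = t2" if t1: "t1 \<in> S" and t2: "t2 \<in> S" for t1 t2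
    proof (rule ccontr)
      assume "t1 \<noteq> t2"
      obtain a1 a2 where a: "a1 \<in> E - generic" "a2 \<in> E - generic"
        "cscale (of_real t1) g = x + a1" "cscale (of_real t2) g = x + a2"
        using t1 t2 by (auto simp: S_def)
      then have "a1 - a2 = cscale (of_real (t1 - t2)) g"
        by (auto simp: cscale_def fun_eq_iff algebra_simps)
      then have "a1 - a2 \<in> generic" using generic_cscale[OF g] \<open>t1 \<noteq> t2\<close> by simp
      then show False using diff_nongeneric a(1,2) by blast
    qed
    then have "S \<subseteq> {t0}" if "t0 \<in> S" for t0 using that by blast
    then have "countable S" by (metis countable_empty countable_insert countable_subset ex_in_conv)
    then show ?thesis by (simp add: S_def)
  qed
  moreover have "g \<in> E" using g by (simp add: generic_iff)
  ultimately have "haar_null_borel (btop s p q) (E - generic)"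
    by (intro haar_null_borel_by_line)
  then show ?thesis unfolding prevalent_def by auto
qed

end

theorem mainTheorem16:
  fixes \<psi> :: "'i::finite \<Rightarrow> real ^ 'd::finite \<Rightarrow> complex"
    and s :: real and p q :: ereal and x0 :: "real ^ 'd"
  assumes "\<And>i. bounded_fast_decay (\<psi> i)"
    and "dyadic_covering \<psi>"
    and "p > 0" and "q > 0"
  shows "prevalent (btop s p q) {c \<in> bspace s p q. div_exp \<psi> c x0 = ereal (- s + dp TYPE('d) p)}
       \<and> residual (btop s p q) {c \<in> bspace s p q. div_exp \<psi> c x0 = ereal (- s + dp TYPE('d) p)}
       \<and> maximal_lineable (bspace s p q) {c \<in> bspace s p q. div_exp \<psi> c x0 = ereal (- s + dp TYPE('d) p)}"
proof -
  obtain B where B: "\<And>i j k x. cmod (wav \<psi> i j k x) \<le> B"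
    using wav_bounded[of \<psi>, OF assms(1)] by blast
  obtain C0 where C0: "C0 > 0" "\<And>x J. \<exists>i j k. J \<le> j \<and> C0 \<le> cmod (wav \<psi> i j k x)"
    using dyadic_covering_large_wav[OF assms(2)] by blast
  interpret critical_point s p q \<psi> x0 B C0
    using assms(3,4) B C0 by unfold_locales auto
  show ?thesis
    using prevalent_generic residual_generic maximal_lineable_generic
    by (simp add: generic_def crit_def)
qed

end
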